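(* Fix the width $m$. Assume that for every $y$ the loss $\ell(\cdot,y)$ is $A$-Lipschitz continuous and that $|\ell|\le B$. Then for any $\delta>0$, with probability at least $1-\delta$ over the choice of an i.i.d. training set $S=\{(x_i,y_i)\}_{i=1}^n$ with $x_i\in[-1,1]^d$, simultaneously for every parameter vector $\theta$ of a width-$m$ two-layer network, $$|L(\theta)-\hat L_n(\theta)|\le 4A\sqrt{\frac{2\ln(2d)}{n}}\,(\|\theta\|_{\mathcal{P}}+1)+B\sqrt{\frac{2\ln\big(2c(\|\theta\|_{\mathcal{P}}+1)^2/\delta\big)}{n}},$$ where $c=\sum_{k=1}^\infty 1/k^2$.
   Context: $\sigma:\mathbb{R}\to\mathbb{R}$ is $1$-Lipschitz and positively homogeneous ($\sigma(\alpha t)=\alpha\sigma(t)$, $\alpha\ge0$). A width-$m$ two-layer network with parameters $\theta=\{(a_k,w_k)\}_{k=1}^m$ is $f(x;\theta)=\sum_{k=1}^m a_k\sigma(w_k^Tx)$, $x\in[-1,1]^d$. Path norm $\|\theta\|_{\mathcal{P}}=\sum_k|a_k|\|w_k\|_1$. Population risk $L(\theta)=\mathbb{E}_{x,y}[\ell(f(x;\theta),y)]$, empirical risk $\hat L_n(\theta)=\frac1n\sum_{i=1}^n\ell(f(x_i;\theta),y_i)$. *)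

theory Defs
  imports "HOL-Probability.Probability"
begin

text \<open>Parameters of a width-m two-layer network: theta k = (a_k, w_k) for k < m
  (values at indices k >= m are irrelevant).\<close>

definition l1norm :: "real ^ 'd \<Rightarrow> real" where
  "l1norm w = (\<Sum>i\<in>UNIV. \<bar>w $ i\<bar>)"

definition nn_out :: "(real \<Rightarrow> real) \<Rightarrow> nat \<Rightarrow> (nat \<Rightarrow> real \<times> (real ^ 'd)) \<Rightarrow> real ^ 'd \<Rightarrow> real" where
  "nn_out \<sigma> m \<theta> x = (\<Sum>k<m. fst (\<theta> k) * \<sigma> (snd (\<theta> k) \<bullet> x))"

definition path_norm :: "nat \<Rightarrow> (nat \<Rightarrow> real \<times> (real ^ 'd)) \<Rightarrow> real" where
  "path_norm m \<theta> = (\<Sum>k<m. \<bar>fst (\<theta> k)\<bar> * l1norm (snd (\<theta> k)))"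

definition pop_risk :: "(real \<Rightarrow> 'b \<Rightarrow> real) \<Rightarrow> (real \<Rightarrow> real) \<Rightarrow> nat \<Rightarrow> ((real ^ 'd) \<times> 'b) measure
    \<Rightarrow> (nat \<Rightarrow> real \<times> (real ^ 'd)) \<Rightarrow> real" where
  "pop_risk loss \<sigma> m D \<theta> = (\<integral>z. loss (nn_out \<sigma> m \<theta> (fst z)) (snd z) \<partial>D)"

definition emp_risk :: "(real \<Rightarrow> 'b \<Rightarrow> real) \<Rightarrow> (real \<Rightarrow> real) \<Rightarrow> nat \<Rightarrow> nat \<Rightarrow> (nat \<Rightarrow> (real ^ 'd) \<times> 'b)
    \<Rightarrow> (nat \<Rightarrow> real \<times> (real ^ 'd)) \<Rightarrow> real" where
  "emp_risk loss \<sigma> m n S \<theta> = (1 / real n) * (\<Sum>i<n. loss (nn_out \<sigma> m \<theta> (fst (S i))) (snd (S i)))"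

end

theory Submission
  imports Defs
begin

text \<open>For a finite class of networks of path norm at most Q, McDiarmid's inequality concentrates
  the supremum of the generalization gap around its mean, and symmetrization bounds that mean by
  twice a Rademacher average. The contraction principle strips the Lipschitz loss and activation,
  positive homogeneity rescales every neuron to an l1-unit weight vector at the price of its share
  of the path norm, and Massart's lemma over the 2d signed coordinate functionals then gives
  sqrt (2 ln (2d) / n) per unit of path norm. A countable dense set of parameters extends the bound
  to all networks of path norm below Q, and a union bound over the levels Q = 1, 2, ..., taken at
  confidences delta / (c Q^2) which sum to delta, makes it uniform in the path norm.\<close>

section \<open>Rademacher averages\<close>

definition rademacher_signs :: "nat \<Rightarrow> (nat \<Rightarrow> real) set" where
  "rademacher_signs n = PiE {..<n} (\<lambda>_. {-1, 1})"

lemma finite_rademacher_signs [simp]: "finite (rademacher_signs n)"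
  unfolding rademacher_signs_def by (auto intro!: finite_PiE)

lemma card_rademacher_signs: "card (rademacher_signs n) = 2 ^ n"
  unfolding rademacher_signs_def by (simp add: card_PiE) (metis numeral_2_eq_2)

lemma rademacher_signs_nonempty: "rademacher_signs n \<noteq> {}"
  using card_rademacher_signs[of n] by auto

lemma rademacher_signs_values: "\<epsilon> \<in> rademacher_signs n \<Longrightarrow> i < n \<Longrightarrow> \<epsilon> i = 1 \<or> \<epsilon> i = -1"
  unfolding rademacher_signs_def by (auto simp: PiE_def Pi_def)

lemma sum_rademacher_signs_Suc:
  "(\<Sum>\<epsilon>\<in>rademacher_signs (Suc n). F \<epsilon>)
     = (\<Sum>\<epsilon>\<in>rademacher_signs n. F (\<epsilon>(n := 1)) + F (\<epsilon>(n := -1)))"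
proof -
  let ?ext = "\<lambda>(y, g). g(n := y)"
  have eq: "rademacher_signs (Suc n) = ?ext ` ({-1, 1} \<times> rademacher_signs n)"
    unfolding rademacher_signs_def lessThan_Suc by (rule PiE_insert_eq)
  have "inj_on ?ext ({-1, 1} \<times> rademacher_signs n)"
  proof (rule inj_onI, clarify)
    fix y g y' g'
    assume g: "g \<in> rademacher_signs n" and g': "g' \<in> rademacher_signs n"
      and eq: "g(n := y) = g'(n := y')"
    have "g i = g' i" for i
      using g g' fun_cong[OF eq, of i]
      by (cases "i = n") (auto simp: rademacher_signs_def PiE_def extensional_def)
    then show "y = y' \<and> g = g'" using fun_cong[OF eq, of n] by auto
  qed
  then have "(\<Sum>\<epsilon>\<in>rademacher_signs (Suc n). F \<epsilon>)
      = (\<Sum>p\<in>{-1::real, 1} \<times> rademacher_signs n. F (?ext p))"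
    unfolding eq by (subst sum.reindex) (simp_all add: comp_def)
  also have "\<dots> = (\<Sum>y\<in>{-1::real, 1}. \<Sum>g\<in>rademacher_signs n. F (g(n := y)))"
    by (subst sum.cartesian_product) (auto intro!: sum.cong)
  also have "\<dots> = (\<Sum>\<epsilon>\<in>rademacher_signs n. F (\<epsilon>(n := 1)) + F (\<epsilon>(n := -1)))"
    by (simp add: sum.distrib add.commute)
  finally show ?thesis .
qed

lemma sum_fun_upd_lessThan_Suc:
  "(\<Sum>i<Suc n. (\<epsilon>(n := s)) i * f i) = (\<Sum>i<n. \<epsilon> i * f i) + s * f n"
  by (simp add: sum.lessThan_Suc)

definition flip_signs :: "nat \<Rightarrow> (nat \<Rightarrow> real) \<Rightarrow> nat \<Rightarrow> real" where
  "flip_signs n \<epsilon> = (\<lambda>i. if i < n then - \<epsilon> i else undefined)"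

lemma sum_rademacher_signs_flip:
  "(\<Sum>\<epsilon>\<in>rademacher_signs n. F \<epsilon>) = (\<Sum>\<epsilon>\<in>rademacher_signs n. F (flip_signs n \<epsilon>))"
proof -
  have "bij_betw (flip_signs n) (rademacher_signs n) (rademacher_signs n)"
    by (rule bij_betw_byWitness[where f'="flip_signs n"])
       (auto simp: rademacher_signs_def flip_signs_def PiE_def Pi_def extensional_def)
  then show ?thesis by (subst sum.reindex_bij_betw[symmetric]) auto
qed

lemma exp_plus_exp_minus_le: "exp (a::real) + exp (-a) \<le> 2 * exp (a\<^sup>2 / 2)"
proof -
  define y where "y = \<bar>a\<bar>"
  have y: "y \<ge> 0" by (simp add: y_def)
  have "- (2*y) * (1/2) + ln (1 + (1/2) * (exp (2*y) - 1)) \<le> (2*y)\<^sup>2 / 8"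
    by (rule Hoeffdings_lemma_aux) (use y in auto)
  also have "(2*y)\<^sup>2 / 8 = a\<^sup>2/2" by (simp add: y_def power2_eq_square)
  also have "1 + (1/2) * (exp (2*y) - 1) = (1 + exp (2*y))/2" by (simp add: field_simps)
  finally have "ln ((1 + exp (2*y))/2) \<le> a\<^sup>2/2 + y" by simp
  then have "(1 + exp (2*y))/2 \<le> exp (a\<^sup>2/2 + y)"
    by (metis add_pos_pos exp_gt_zero exp_le_cancel_iff exp_ln half_gt_zero zero_less_one)
  then have "(1 + exp (2*y)) * exp (-y) \<le> 2 * exp (a\<^sup>2/2 + y) * exp (-y)"
    by simp
  also have "2 * exp (a\<^sup>2/2 + y) * exp (-y) = 2 * exp (a\<^sup>2/2)"
    by (simp add: mult.assoc flip: exp_add)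
  also have "(1 + exp (2*y)) * exp (-y) = exp y + exp (-y)"
    by (simp add: distrib_right flip: exp_add)
  also have "exp y + exp (-y) = exp a + exp (-a)"
    by (cases "a \<ge> 0") (auto simp: y_def)
  finally show ?thesis .
qed

lemma sum_rademacher_signs_exp_le:
  "(\<Sum>\<epsilon>\<in>rademacher_signs n. exp (\<Sum>i<n. \<epsilon> i * a i)) \<le> 2 ^ n * exp ((\<Sum>i<n. (a i)\<^sup>2) / 2)"
proof (induction n)
  case 0
  then show ?case by (simp add: rademacher_signs_def)
next
  case (Suc n)
  let ?S = "\<lambda>\<epsilon>. exp (\<Sum>i<n. \<epsilon> i * a i)"
  have "(\<Sum>\<epsilon>\<in>rademacher_signs (Suc n). exp (\<Sum>i<Suc n. \<epsilon> i * a i))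
      = (\<Sum>\<epsilon>\<in>rademacher_signs n. ?S \<epsilon> * (exp (a n) + exp (- a n)))"
    by (simp add: sum_rademacher_signs_Suc sum_fun_upd_lessThan_Suc exp_add distrib_left)
  also have "\<dots> \<le> (\<Sum>\<epsilon>\<in>rademacher_signs n. ?S \<epsilon>) * (2 * exp ((a n)\<^sup>2/2))"
    unfolding sum_distrib_right by (intro sum_mono mult_left_mono exp_plus_exp_minus_le) auto
  also have "\<dots> \<le> 2 ^ n * exp ((\<Sum>i<n. (a i)\<^sup>2) / 2) * (2 * exp ((a n)\<^sup>2/2))"
    by (intro mult_right_mono Suc.IH) auto
  also have "\<dots> = 2 ^ Suc n * exp ((\<Sum>i<Suc n. (a i)\<^sup>2) / 2)"
    by (simp add: add_divide_distrib sum.lessThan_Suc mult_ac flip: exp_add)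
  finally show ?case .
qed

lemma sum_rademacher_signs_exp_Max_le:
  fixes v :: "'k \<Rightarrow> nat \<Rightarrow> real"
  assumes K: "finite K" "K \<noteq> {}" and l: "l \<ge> 0"
    and v: "\<And>k. k \<in> K \<Longrightarrow> (\<Sum>i<n. (v k i)\<^sup>2) \<le> r\<^sup>2"
  shows "(\<Sum>\<epsilon>\<in>rademacher_signs n. exp (l * Max ((\<lambda>k. \<Sum>i<n. \<epsilon> i * v k i) ` K)))
           \<le> card K * (2 ^ n * exp (l\<^sup>2 * r\<^sup>2 / 2))"
proof -
  have "exp (l * Max ((\<lambda>k. \<Sum>i<n. \<epsilon> i * v k i) ` K)) \<le> (\<Sum>k\<in>K. exp (\<Sum>i<n. \<epsilon> i * (l * v k i)))"
    for \<epsilon>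
  proof -
    obtain k0 where k0: "k0 \<in> K" "Max ((\<lambda>k. \<Sum>i<n. \<epsilon> i * v k i) ` K) = (\<Sum>i<n. \<epsilon> i * v k0 i)"
      using obtains_MAX[OF K, of "\<lambda>k. \<Sum>i<n. \<epsilon> i * v k i"] by blast
    have "exp (l * Max ((\<lambda>k. \<Sum>i<n. \<epsilon> i * v k i) ` K)) = exp (\<Sum>i<n. \<epsilon> i * (l * v k0 i))"
      by (simp add: k0 sum_distrib_left mult_ac)
    also have "\<dots> \<le> (\<Sum>k\<in>K. exp (\<Sum>i<n. \<epsilon> i * (l * v k i)))"
      by (rule member_le_sum[OF k0(1)]) (use K in auto)
    finally show ?thesis .
  qed
  then have "(\<Sum>\<epsilon>\<in>rademacher_signs n. exp (l * Max ((\<lambda>k. \<Sum>i<n. \<epsilon> i * v k i) ` K)))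
      \<le> (\<Sum>k\<in>K. \<Sum>\<epsilon>\<in>rademacher_signs n. exp (\<Sum>i<n. \<epsilon> i * (l * v k i)))"
    by (subst sum.swap) (rule sum_mono)
  also have "\<dots> \<le> (\<Sum>k\<in>K. 2 ^ n * exp (l\<^sup>2 * r\<^sup>2 / 2))"
  proof (rule sum_mono)
    fix k assume k: "k \<in> K"
    have "(\<Sum>i<n. (l * v k i)\<^sup>2) \<le> l\<^sup>2 * r\<^sup>2"
      using mult_left_mono[OF v[OF k], of "l\<^sup>2"]
      by (simp add: power_mult_distrib sum_distrib_left)
    then have "exp ((\<Sum>i<n. (l * v k i)\<^sup>2) / 2) \<le> exp (l\<^sup>2 * r\<^sup>2 / 2)" by simp
    with sum_rademacher_signs_exp_le[where a="\<lambda>i. l * v k i"]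
    show "(\<Sum>\<epsilon>\<in>rademacher_signs n. exp (\<Sum>i<n. \<epsilon> i * (l * v k i))) \<le> 2 ^ n * exp (l\<^sup>2 * r\<^sup>2 / 2)"
      by (meson mult_left_mono order_trans zero_le_power zero_le_numeral)
  qed
  finally show ?thesis by simp
qed

text \<open>Massart's lemma, via Jensen's inequality for exp at inverse temperature s / r, where
  s = sqrt (2 ln |K|).\<close>

lemma massart_finite_class:
  fixes v :: "'k \<Rightarrow> nat \<Rightarrow> real"
  assumes K: "finite K" "card K \<ge> 2" and r: "r > 0"
    and v: "\<And>k. k \<in> K \<Longrightarrow> (\<Sum>i<n. (v k i)\<^sup>2) \<le> r\<^sup>2"
  shows "(\<Sum>\<epsilon>\<in>rademacher_signs n. Max ((\<lambda>k. \<Sum>i<n. \<epsilon> i * v k i) ` K))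
           \<le> 2 ^ n * (sqrt (2 * ln (card K)) * r)"
proof -
  define N :: real where "N = 2 ^ n"
  define X where "X = (\<lambda>\<epsilon>. Max ((\<lambda>k. \<Sum>i<n. \<epsilon> i * v k i) ` K))"
  define c :: real where "c = card K"
  define s where "s = sqrt (2 * ln c)"
  define l where "l = s / r"
  define \<mu> where "\<mu> = (\<Sum>\<epsilon>\<in>rademacher_signs n. X \<epsilon>) / N"
  have c2: "c \<ge> 2" using K by (simp add: c_def)
  have s: "s > 0" "s\<^sup>2 = 2 * ln c" using c2 by (auto simp: s_def)
  have l: "l > 0" using s r by (simp add: l_def)
  have N: "N > 0" "card (rademacher_signs n) = N" by (simp_all add: N_def card_rademacher_signs)
  have "exp (l * \<mu>) \<le> (\<Sum>\<epsilon>\<in>rademacher_signs n. (1/N) * exp (l * X \<epsilon>))"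
  proof -
    have "(\<Sum>\<epsilon>\<in>rademacher_signs n. (1/N) *\<^sub>R X \<epsilon>) = \<mu>"
      by (simp add: \<mu>_def sum_distrib_left[symmetric] divide_inverse mult.commute)
    then show ?thesis
      using convex_on_sum[OF finite_rademacher_signs rademacher_signs_nonempty convex_on_exp[of l],
          where a="\<lambda>_. 1/N" and y=X] l N
      by auto
  qed
  also have "\<dots> \<le> (1/N) * (c * (N * exp (l\<^sup>2 * r\<^sup>2 / 2)))"
  proof -
    have sum_le: "(\<Sum>\<epsilon>\<in>rademacher_signs n. exp (l * X \<epsilon>)) \<le> c * (N * exp (l\<^sup>2 * r\<^sup>2 / 2))"
      unfolding X_def c_def N_def
      by (rule sum_rademacher_signs_exp_Max_le[OF K(1) _ _ v]) (use K l in auto)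
    show ?thesis
      using mult_left_mono[OF sum_le, of "1/N"] N by (simp add: sum_distrib_left)
  qed
  also have "\<dots> = exp (ln c + l\<^sup>2 * r\<^sup>2 / 2)"
    using N c2 by (simp add: exp_add)
  finally have "l * \<mu> \<le> ln c + l\<^sup>2 * r\<^sup>2 / 2" by simp
  also have "l\<^sup>2 * r\<^sup>2 = s\<^sup>2" using r by (simp add: l_def power_divide)
  finally have "l * \<mu> \<le> s\<^sup>2" using s by simp
  then have "\<mu> \<le> s\<^sup>2 / l" using l by (simp add: field_simps)
  also have "s\<^sup>2 / l = s * r" using s r by (simp add: l_def power2_eq_square field_simps)
  finally have "(\<Sum>\<epsilon>\<in>rademacher_signs n. X \<epsilon>) \<le> N * (s * r)"
    using N by (simp add: \<mu>_def field_simps)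
  then show ?thesis by (simp add: X_def N_def s_def c_def)
qed

lemma Max_lipschitz_two_point:
  fixes w t :: "'j \<Rightarrow> real"
  assumes J: "finite J" "J \<noteq> {}" and A: "\<And>a b. \<bar>\<phi> a - \<phi> b\<bar> \<le> A * \<bar>a - b\<bar>"
  shows "Max ((\<lambda>j. w j + \<phi> (t j)) ` J) + Max ((\<lambda>j. w j - \<phi> (t j)) ` J)
       \<le> Max ((\<lambda>j. w j + A * t j) ` J) + Max ((\<lambda>j. w j - A * t j) ` J)"
proof -
  obtain j1 where j1: "j1 \<in> J" "Max ((\<lambda>j. w j + \<phi> (t j)) ` J) = w j1 + \<phi> (t j1)"
    using obtains_MAX[OF J, of "\<lambda>j. w j + \<phi> (t j)"] by blast
  obtain j2 where j2: "j2 \<in> J" "Max ((\<lambda>j. w j - \<phi> (t j)) ` J) = w j2 - \<phi> (t j2)"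
    using obtains_MAX[OF J, of "\<lambda>j. w j - \<phi> (t j)"] by blast
  have m1: "w j + A * t j \<le> Max ((\<lambda>j. w j + A * t j) ` J)" if "j \<in> J" for j
    using J that by (intro Max_ge) auto
  have m2: "w j - A * t j \<le> Max ((\<lambda>j. w j - A * t j) ` J)" if "j \<in> J" for j
    using J that by (intro Max_ge) auto
  have "\<phi> (t j1) - \<phi> (t j2) \<le> A * \<bar>t j1 - t j2\<bar>" using A[of "t j1" "t j2"] by linarith
  then show ?thesis
    using m1[OF j1(1)] m2[OF j2(1)] m1[OF j2(1)] m2[OF j1(1)] j1 j2
    by (cases "t j1 \<ge> t j2") (auto simp: abs_if algebra_simps)
qed

text \<open>The Ledoux--Talagrand contraction principle, proved one sign at a time; the offset u
  carries the already-processed coordinates through the induction.\<close>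

lemma contraction_principle_offset:
  fixes v :: "'j \<Rightarrow> nat \<Rightarrow> real"
  assumes J: "finite J" "J \<noteq> {}" and A: "\<And>i a b. \<bar>\<phi> i a - \<phi> i b\<bar> \<le> A * \<bar>a - b\<bar>"
  shows "(\<Sum>\<epsilon>\<in>rademacher_signs n. Max ((\<lambda>j. u j + (\<Sum>i<n. \<epsilon> i * \<phi> i (v j i))) ` J))
       \<le> (\<Sum>\<epsilon>\<in>rademacher_signs n. Max ((\<lambda>j. u j + (\<Sum>i<n. \<epsilon> i * (A * v j i))) ` J))"
proof (induction n arbitrary: u)
  case 0
  then show ?case by simp
next
  case (Suc n)
  let ?RS = "rademacher_signs n"
  have "(\<Sum>\<epsilon>\<in>rademacher_signs (Suc n). Max ((\<lambda>j. u j + (\<Sum>i<Suc n. \<epsilon> i * \<phi> i (v j i))) ` J))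
    = (\<Sum>\<epsilon>\<in>?RS. Max ((\<lambda>j. (u j + \<phi> n (v j n)) + (\<Sum>i<n. \<epsilon> i * \<phi> i (v j i))) ` J))
      + (\<Sum>\<epsilon>\<in>?RS. Max ((\<lambda>j. (u j - \<phi> n (v j n)) + (\<Sum>i<n. \<epsilon> i * \<phi> i (v j i))) ` J))"
    by (simp add: sum_rademacher_signs_Suc sum_fun_upd_lessThan_Suc sum.distrib algebra_simps)
  also have "\<dots> \<le> (\<Sum>\<epsilon>\<in>?RS. Max ((\<lambda>j. (u j + \<phi> n (v j n)) + (\<Sum>i<n. \<epsilon> i * (A * v j i))) ` J))
      + (\<Sum>\<epsilon>\<in>?RS. Max ((\<lambda>j. (u j - \<phi> n (v j n)) + (\<Sum>i<n. \<epsilon> i * (A * v j i))) ` J))"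
    by (intro add_mono Suc.IH)
  also have "\<dots> = (\<Sum>\<epsilon>\<in>?RS. Max ((\<lambda>j. (u j + (\<Sum>i<n. \<epsilon> i * (A * v j i))) + \<phi> n (v j n)) ` J)
       + Max ((\<lambda>j. (u j + (\<Sum>i<n. \<epsilon> i * (A * v j i))) - \<phi> n (v j n)) ` J))"
    by (simp add: sum.distrib algebra_simps)
  also have "\<dots> \<le> (\<Sum>\<epsilon>\<in>?RS. Max ((\<lambda>j. (u j + (\<Sum>i<n. \<epsilon> i * (A * v j i))) + A * v j n) ` J)
       + Max ((\<lambda>j. (u j + (\<Sum>i<n. \<epsilon> i * (A * v j i))) - A * v j n) ` J))"
    by (intro sum_mono Max_lipschitz_two_point[OF J] A)
  also have "\<dots> = (\<Sum>\<epsilon>\<in>rademacher_signs (Suc n). Max ((\<lambda>j. u j + (\<Sum>i<Suc n. \<epsilon> i * (A * v j i))) ` J))"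
    by (simp add: sum_rademacher_signs_Suc sum_fun_upd_lessThan_Suc algebra_simps)
  finally show ?case .
qed

lemma contraction_principle:
  fixes v :: "'j \<Rightarrow> nat \<Rightarrow> real"
  assumes J: "finite J" "J \<noteq> {}" and A: "\<And>i a b. \<bar>\<phi> i a - \<phi> i b\<bar> \<le> A * \<bar>a - b\<bar>"
  shows "(\<Sum>\<epsilon>\<in>rademacher_signs n. Max ((\<lambda>j. \<Sum>i<n. \<epsilon> i * \<phi> i (v j i)) ` J))
       \<le> (\<Sum>\<epsilon>\<in>rademacher_signs n. Max ((\<lambda>j. \<Sum>i<n. \<epsilon> i * (A * v j i)) ` J))"
  using contraction_principle_offset[OF J A, where u="\<lambda>_. 0"] by simp

section \<open>Rademacher complexity of two-layer networks\<close>

lemma Max_abs_le_Max_plus_Max_uminus: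
  fixes f :: "'a \<Rightarrow> real"
  assumes W: "finite W" "w0 \<in> W" and f0: "f w0 = 0"
  shows "Max ((\<lambda>u. \<bar>f u\<bar>) ` W) \<le> Max (f ` W) + Max ((\<lambda>u. - f u) ` W)"
proof -
  have "f u \<le> Max (f ` W)" "- f u \<le> Max ((\<lambda>u. - f u) ` W)" if "u \<in> W" for u
    using W that by (auto intro!: Max_ge)
  then have "\<bar>f u\<bar> \<le> Max (f ` W) + Max ((\<lambda>u. - f u) ` W)" if "u \<in> W" for u
    using that W(2) f0 by (fastforce simp: abs_if)
  then show ?thesis using W by (subst Max_le_iff) auto
qed

lemma l1norm_nonneg: "l1norm w \<ge> 0"
  unfolding l1norm_def by (auto intro: sum_nonneg)

lemma path_norm_nonneg: "path_norm m \<theta> \<ge> 0"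
  unfolding path_norm_def by (intro sum_nonneg mult_nonneg_nonneg abs_ge_zero l1norm_nonneg)

lemma l1norm_eq_0_iff: "l1norm (w::real^'d) = 0 \<longleftrightarrow> w = 0"
  unfolding l1norm_def by (subst sum_nonneg_eq_0_iff) (auto simp: vec_eq_iff)

lemma l1norm_scaleR: "l1norm (c *\<^sub>R (w::real^'d)) = \<bar>c\<bar> * l1norm w"
  unfolding l1norm_def by (simp add: abs_mult sum_distrib_left)

lemma l1norm_uminus: "l1norm (- w) = l1norm w"
  by (simp add: l1norm_def)

lemma l1norm_triangle: "l1norm ((v::real^'d) + w) \<le> l1norm v + l1norm w"
  unfolding l1norm_def by (simp add: sum.distrib[symmetric] sum_mono abs_triangle_ineq)

lemma l1norm_minus_commute: "l1norm ((v::real^'d) - w) = l1norm (w - v)"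
  unfolding l1norm_def by (simp add: abs_minus_commute)

lemma abs_l1norm_diff_le: "\<bar>l1norm (v::real^'d) - l1norm w\<bar> \<le> l1norm (v - w)"
  using l1norm_triangle[of "v - w" w] l1norm_triangle[of "w - v" v] l1norm_minus_commute[of v w]
  by simp

lemma l1norm_le_norm: "l1norm (v::real^'d) \<le> CARD('d) * norm v"
proof -
  have "(\<Sum>i\<in>UNIV. \<bar>v $ i\<bar>) \<le> (\<Sum>i\<in>(UNIV::'d set). norm v)"
    by (rule sum_mono) (rule component_le_norm_cart)
  then show ?thesis unfolding l1norm_def by simp
qed

lemma inner_le_l1norm:
  fixes u x :: "real^'d"
  assumes "\<And>l. \<bar>x $ l\<bar> \<le> M"
  shows "u \<bullet> x \<le> l1norm u * M"
proof -
  have "u \<bullet> x = (\<Sum>l\<in>UNIV. u $ l * x $ l)" by (simp add: inner_vec_def)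
  also have "\<dots> \<le> (\<Sum>l\<in>UNIV. \<bar>u $ l\<bar> * M)"
  proof (rule sum_mono)
    fix l
    have "u $ l * x $ l \<le> \<bar>u $ l\<bar> * \<bar>x $ l\<bar>" by (simp add: abs_mult[symmetric])
    also have "\<dots> \<le> \<bar>u $ l\<bar> * M" using assms[of l] by (intro mult_left_mono) auto
    finally show "u $ l * x $ l \<le> \<bar>u $ l\<bar> * M" .
  qed
  also have "\<dots> = l1norm u * M" by (simp add: l1norm_def sum_distrib_right)
  finally show ?thesis .
qed

lemma abs_inner_le_l1norm:
  fixes u x :: "real^'d"
  assumes "\<And>l. \<bar>x $ l\<bar> \<le> M"
  shows "\<bar>u \<bullet> x\<bar> \<le> l1norm u * M"
  using inner_le_l1norm[OF assms, of u] inner_le_l1norm[OF assms, of "- u"]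
  by (simp add: l1norm_uminus)

text \<open>The l1 unit ball is the convex hull of the 2d signed coordinate vectors, so the
  Rademacher complexity of the linear class over it is that of 2d vectors, which Massart's
  lemma controls.\<close>

lemma rademacher_l1_ball_le:
  fixes x :: "nat \<Rightarrow> real^'d" and W :: "(real^'d) set"
  assumes W: "finite W" "W \<noteq> {}" "\<And>u. u \<in> W \<Longrightarrow> l1norm u \<le> 1"
    and x: "\<And>i l. i < n \<Longrightarrow> \<bar>x i $ l\<bar> \<le> 1" and n: "n > 0"
  shows "(\<Sum>\<epsilon>\<in>rademacher_signs n. Max ((\<lambda>u. \<Sum>i<n. \<epsilon> i * (u \<bullet> x i)) ` W))
           \<le> 2 ^ n * (sqrt (2 * ln (2 * real CARD('d))) * sqrt n)"
proof -
  define K where "K = (UNIV :: 'd set) \<times> {-1::real, 1}"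
  define v where "v = (\<lambda>(l, s::real) i. s * x i $ l)"
  have cardK: "card K = 2 * CARD('d)" by (simp add: K_def card_cartesian_product)
  have signed_coords: "(\<Sum>i<n. \<epsilon> i * (u \<bullet> x i)) \<le> Max ((\<lambda>k. \<Sum>i<n. \<epsilon> i * v k i) ` K)"
    if u: "u \<in> W" for u \<epsilon>
  proof -
    define Y where "Y = (\<chi> l. \<Sum>i<n. \<epsilon> i * x i $ l)"
    define MM where "MM = Max ((\<lambda>k. \<Sum>i<n. \<epsilon> i * v k i) ` K)"
    have Y: "\<bar>Y $ l\<bar> \<le> MM" for l
    proof -
      have "(\<Sum>i<n. \<epsilon> i * v (l, 1) i) \<le> MM" "(\<Sum>i<n. \<epsilon> i * v (l, -1) i) \<le> MM"
        unfolding MM_def by (intro Max_ge; simp add: K_def)+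
      then show ?thesis by (simp add: Y_def v_def sum_negf)
    qed
    have "(\<Sum>i<n. \<epsilon> i * (u \<bullet> x i)) = u \<bullet> Y"
      by (simp add: Y_def inner_vec_def sum_distrib_left mult_ac sum.swap[of _ "{..<n}"])
    also have "\<dots> \<le> l1norm u * MM" by (rule inner_le_l1norm[OF Y])
    also have "\<dots> \<le> MM"
      using W(3)[OF u] Y[of undefined] l1norm_nonneg[of u] by (intro mult_left_le_one_le) auto
    finally show ?thesis by (simp add: MM_def)
  qed
  have "(\<Sum>\<epsilon>\<in>rademacher_signs n. Max ((\<lambda>u. \<Sum>i<n. \<epsilon> i * (u \<bullet> x i)) ` W))
      \<le> (\<Sum>\<epsilon>\<in>rademacher_signs n. Max ((\<lambda>k. \<Sum>i<n. \<epsilon> i * v k i) ` K))"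
    using W signed_coords by (intro sum_mono) (subst Max_le_iff, auto)
  also have "\<dots> \<le> 2 ^ n * (sqrt (2 * ln (card K)) * sqrt n)"
  proof (rule massart_finite_class)
    show "finite K" by (simp add: K_def)
    show "2 \<le> card K" using cardK zero_less_card_finite[where 'a='d] by linarith
    show "sqrt (real n) > 0" using n by simp
    fix k assume k: "k \<in> K"
    have "(v k i)\<^sup>2 \<le> 1" if "i < n" for i
      using k x[OF that] by (auto simp: K_def v_def abs_square_le_1 power_mult_distrib)
    then have "(\<Sum>i<n. (v k i)\<^sup>2) \<le> (\<Sum>i<n. 1)" by (intro sum_mono) auto
    then show "(\<Sum>i<n. (v k i)\<^sup>2) \<le> (sqrt (real n))\<^sup>2" by simp
  qed
  finally show ?thesis by (simp add: cardK)
qed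

context
  fixes \<sigma> :: "real \<Rightarrow> real"
  assumes sigma_lip: "\<And>s t. \<bar>\<sigma> s - \<sigma> t\<bar> \<le> \<bar>s - t\<bar>"
    and sigma_hom: "\<And>\<alpha> t. \<alpha> \<ge> 0 \<Longrightarrow> \<sigma> (\<alpha> * t) = \<alpha> * \<sigma> t"
begin

lemma activation_zero: "\<sigma> 0 = 0"
  using sigma_hom[of 0 0] by simp

definition l1_normalize :: "real^'d \<Rightarrow> real^'d" where
  "l1_normalize w = (1 / l1norm w) *\<^sub>R w"

lemma l1norm_l1_normalize_le: "l1norm (l1_normalize w) \<le> 1"
  unfolding l1_normalize_def l1norm_scaleR using l1norm_nonneg[of w]
  by (cases "l1norm w = 0") auto

lemma activation_l1_normalize: "\<sigma> (w \<bullet> x) = l1norm w * \<sigma> (l1_normalize w \<bullet> x)"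
proof (cases "l1norm w = 0")
  case True
  then show ?thesis by (simp add: l1norm_eq_0_iff activation_zero)
next
  case False
  then have "w \<bullet> x = l1norm w * (l1_normalize w \<bullet> x)"
    by (simp add: l1_normalize_def)
  then show ?thesis using sigma_hom[OF l1norm_nonneg[of w]] by simp
qed

text \<open>Positive homogeneity lets each neuron be rescaled to an l1-unit weight vector,
  moving its scale into the path norm.\<close>

lemma rademacher_network_le_path_norm:
  assumes H: "\<And>k. k < m \<Longrightarrow> \<bar>\<Sum>i<n. \<epsilon> i * \<sigma> (l1_normalize (snd (\<theta> k)) \<bullet> x i)\<bar> \<le> H"
  shows "(\<Sum>i<n. \<epsilon> i * nn_out \<sigma> m \<theta> (x i)) \<le> path_norm m \<theta> * H"
proof -
  let ?a = "\<lambda>k. fst (\<theta> k)" and ?w = "\<lambda>k. snd (\<theta> k)"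
  let ?h = "\<lambda>k. \<Sum>i<n. \<epsilon> i * \<sigma> (l1_normalize (?w k) \<bullet> x i)"
  have "(\<Sum>i<n. \<epsilon> i * nn_out \<sigma> m \<theta> (x i)) = (\<Sum>k<m. \<Sum>i<n. \<epsilon> i * (?a k * \<sigma> (?w k \<bullet> x i)))"
    unfolding nn_out_def by (simp add: sum_distrib_left sum.swap[of _ "{..<n}"])
  also have "\<dots> = (\<Sum>k<m. ?a k * l1norm (?w k) * ?h k)"
    by (subst activation_l1_normalize) (simp add: sum_distrib_left mult_ac)
  also have "\<dots> \<le> (\<Sum>k<m. \<bar>?a k\<bar> * l1norm (?w k) * H)"
  proof (rule sum_mono)
    fix k assume "k \<in> {..<m}"
    then have "\<bar>?h k\<bar> \<le> H" by (intro H) auto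
    then have "\<bar>?a k\<bar> * l1norm (?w k) * \<bar>?h k\<bar> \<le> \<bar>?a k\<bar> * l1norm (?w k) * H"
      using l1norm_nonneg[of "?w k"] by (intro mult_left_mono) auto
    moreover have "?a k * l1norm (?w k) * ?h k \<le> \<bar>?a k\<bar> * l1norm (?w k) * \<bar>?h k\<bar>"
      using abs_ge_self[of "?a k * l1norm (?w k) * ?h k"] l1norm_nonneg[of "?w k"]
      by (simp add: abs_mult)
    ultimately show "?a k * l1norm (?w k) * ?h k \<le> \<bar>?a k\<bar> * l1norm (?w k) * H" by linarith
  qed
  also have "\<dots> = path_norm m \<theta> * H"
    by (simp add: path_norm_def sum_distrib_right)
  finally show ?thesis .
qed

lemma rademacher_two_layer_network:
  fixes x :: "nat \<Rightarrow> real^'d" and J :: "(nat \<Rightarrow> real \<times> (real^'d)) set"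
  assumes J: "finite J" "J \<noteq> {}" and Q: "\<And>\<theta>. \<theta> \<in> J \<Longrightarrow> path_norm m \<theta> \<le> Q"
    and x: "\<And>i l. i < n \<Longrightarrow> \<bar>x i $ l\<bar> \<le> 1" and n: "n > 0"
  shows "(\<Sum>\<epsilon>\<in>rademacher_signs n. Max ((\<lambda>\<theta>. \<Sum>i<n. \<epsilon> i * nn_out \<sigma> m \<theta> (x i)) ` J))
         \<le> 2 ^ n * (2 * Q * (sqrt (2 * ln (2 * real CARD('d))) * sqrt n))"
proof -
  define W where "W = insert 0 ((\<lambda>(\<theta>, k). l1_normalize (snd (\<theta> k))) ` (J \<times> {..<m}))"
  have W: "finite W" "0 \<in> W" "\<And>u. u \<in> W \<Longrightarrow> l1norm u \<le> 1"
    using J l1norm_l1_normalize_le by (auto simp: W_def l1norm_def)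
  define h where "h = (\<lambda>\<epsilon> u. \<Sum>i<n. \<epsilon> i * \<sigma> (u \<bullet> x i))"
  define R where "R = (\<Sum>\<epsilon>\<in>rademacher_signs n. Max (h \<epsilon> ` W))"
  have "R \<le> (\<Sum>\<epsilon>\<in>rademacher_signs n. Max ((\<lambda>u. \<Sum>i<n. \<epsilon> i * (1 * (u \<bullet> x i))) ` W))"
    unfolding R_def h_def
    by (rule contraction_principle[OF W(1), where \<phi>="\<lambda>i. \<sigma>" and v="\<lambda>u i. u \<bullet> x i"])
       (use W sigma_lip in auto)
  also have "\<dots> \<le> 2 ^ n * (sqrt (2 * ln (2 * real CARD('d))) * sqrt n)"
    using rademacher_l1_ball_le[where x=x, OF W(1) _ W(3) x n] W(2) by auto
  finally have R_le: "R \<le> 2 ^ n * (sqrt (2 * ln (2 * real CARD('d))) * sqrt n)" .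
  have Q0: "Q \<ge> 0"
    using J Q path_norm_nonneg by (metis ex_in_conv order.trans)
  have "Max ((\<lambda>\<theta>. \<Sum>i<n. \<epsilon> i * nn_out \<sigma> m \<theta> (x i)) ` J)
      \<le> Q * (Max (h \<epsilon> ` W) + Max (h (flip_signs n \<epsilon>) ` W))" for \<epsilon>
  proof -
    define H where "H = Max ((\<lambda>u. \<bar>h \<epsilon> u\<bar>) ` W)"
    have H: "\<bar>h \<epsilon> u\<bar> \<le> H" if "u \<in> W" for u
      unfolding H_def using W that by (intro Max_ge) auto
    have "(\<Sum>i<n. \<epsilon> i * nn_out \<sigma> m \<theta> (x i)) \<le> Q * H" if "\<theta> \<in> J" for \<theta>
    proof -
      have "(\<Sum>i<n. \<epsilon> i * nn_out \<sigma> m \<theta> (x i)) \<le> path_norm m \<theta> * H"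
        using that by (intro rademacher_network_le_path_norm H[unfolded h_def]) (auto simp: W_def)
      also have "\<dots> \<le> Q * H" using Q[OF that] H[OF W(2)] by (intro mult_right_mono) auto
      finally show ?thesis .
    qed
    then have "Max ((\<lambda>\<theta>. \<Sum>i<n. \<epsilon> i * nn_out \<sigma> m \<theta> (x i)) ` J) \<le> Q * H"
      using J by (subst Max_le_iff) auto
    also have "H \<le> Max (h \<epsilon> ` W) + Max ((\<lambda>u. - h \<epsilon> u) ` W)"
      unfolding H_def by (rule Max_abs_le_Max_plus_Max_uminus[OF W(1,2)]) (simp add: h_def activation_zero)
    also have "(\<lambda>u. - h \<epsilon> u) = h (flip_signs n \<epsilon>)"
      by (simp add: h_def flip_signs_def sum_negf fun_eq_iff)
    finally show ?thesis using Q0 by (simp add: mult_left_mono)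
  qed
  then have "(\<Sum>\<epsilon>\<in>rademacher_signs n. Max ((\<lambda>\<theta>. \<Sum>i<n. \<epsilon> i * nn_out \<sigma> m \<theta> (x i)) ` J))
      \<le> (\<Sum>\<epsilon>\<in>rademacher_signs n. Q * (Max (h \<epsilon> ` W) + Max (h (flip_signs n \<epsilon>) ` W)))"
    by (rule sum_mono)
  also have "\<dots> = Q * (R + (\<Sum>\<epsilon>\<in>rademacher_signs n. Max (h (flip_signs n \<epsilon>) ` W)))"
    by (simp add: R_def distrib_left sum.distrib sum_distrib_left)
  also have "\<dots> = 2 * Q * R"
    using sum_rademacher_signs_flip[of "\<lambda>\<epsilon>. Max (h \<epsilon> ` W)" n] by (simp add: R_def)
  also have "\<dots> \<le> 2 * Q * (2 ^ n * (sqrt (2 * ln (2 * real CARD('d))) * sqrt n))"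
    using R_le Q0 by (intro mult_left_mono) auto
  finally show ?thesis by (simp add: mult_ac)
qed

end

section \<open>McDiarmid's inequality\<close>

lemma (in prob_space) abs_integral_le_const:
  fixes h :: "_ \<Rightarrow> real"
  assumes h: "h \<in> borel_measurable M" and b: "\<And>x. x \<in> space M \<Longrightarrow> \<bar>h x\<bar> \<le> K"
  shows "\<bar>\<integral>x. h x \<partial>M\<bar> \<le> K"
proof -
  have "integrable M h" using b h by (intro integrable_const_bound[where B=K]) auto
  then have "(\<integral>x. \<bar>h x\<bar> \<partial>M) \<le> K" using b by (intro integral_le_const) (auto intro!: AE_I2)
  then show ?thesis using integral_abs_bound[of M h] by linarith
qed

text \<open>Hoeffding's lemma only needs the range of h to have diameter c: it then lies in an interval
  [a, a + c] with a the infimum of the range.\<close>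

lemma (in prob_space) Hoeffdings_lemma_oscillation:
  fixes h :: "_ \<Rightarrow> real"
  assumes h [measurable]: "h \<in> borel_measurable M"
    and osc: "\<And>y y'. y \<in> space M \<Longrightarrow> y' \<in> space M \<Longrightarrow> \<bar>h y - h y'\<bar> \<le> c" and l: "l > 0"
  shows "(\<integral>\<^sup>+y. exp (l * (h y - expectation h)) \<partial>M) \<le> ennreal (exp (l\<^sup>2 * c\<^sup>2 / 8))"
proof -
  obtain y0 where y0: "y0 \<in> space M" using not_empty by blast
  define a where "a = Inf (h ` space M)"
  have bdd: "bdd_below (h ` space M)"
    using osc[OF _ y0] by (intro bdd_belowI[where m="h y0 - c"]) (force simp: abs_le_iff)
  have "h y \<in> {a..a + c}" if y: "y \<in> space M" for y
  proof -
    have "a \<le> h y" unfolding a_def using bdd y by (intro cInf_lower) auto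
    moreover have "h y - c \<le> a" unfolding a_def
    proof (rule cInf_greatest)
      show "h ` space M \<noteq> {}" using y0 by blast
      fix z assume "z \<in> h ` space M"
      then show "h y - c \<le> z" using osc[OF y] by (force simp: abs_le_iff)
    qed
    ultimately show ?thesis by simp
  qed
  then interpret H: interval_bounded_random_variable M h a "a + c"
    by unfold_locales (auto intro!: AE_I2)
  show ?thesis using H.Hoeffdings_lemma_nn_integral[OF l] by simp
qed

text \<open>The moment generating function bound behind McDiarmid's inequality, by induction on the
  index set: integrating out one coordinate is Hoeffding's lemma for a function of oscillation c,
  and the partial integral again has bounded differences.\<close>

lemma mcdiarmid_mgf_le:
  fixes D :: "'a measure" and f :: "(nat \<Rightarrow> 'a) \<Rightarrow> real" and c K l :: real
  assumes D: "prob_space D" and I: "finite I"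
    and f: "f \<in> borel_measurable (PiM I (\<lambda>_. D))"
    and bnd: "\<And>x. x \<in> space (PiM I (\<lambda>_. D)) \<Longrightarrow> \<bar>f x\<bar> \<le> K"
    and bd: "\<And>x i y. x \<in> space (PiM I (\<lambda>_. D)) \<Longrightarrow> i \<in> I \<Longrightarrow> y \<in> space D \<Longrightarrow>
               \<bar>f x - f (x(i := y))\<bar> \<le> c"
    and l: "l > 0"
  shows "(\<integral>\<^sup>+x. exp (l * (f x - (\<integral>z. f z \<partial>PiM I (\<lambda>_. D)))) \<partial>PiM I (\<lambda>_. D))
           \<le> ennreal (exp (l\<^sup>2 * card I * c\<^sup>2 / 8))"
  using I f bnd bd
proof (induction I arbitrary: f rule: finite_induct)
  case empty
  interpret P: prob_space "PiM ({}::nat set) (\<lambda>_. D)" by (rule prob_space_PiM) (use D in auto)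
  have "(\<integral>z. f z \<partial>PiM ({}::nat set) (\<lambda>_. D)) = f (\<lambda>_. undefined)"
    by (simp add: PiM_empty lebesgue_integral_count_space_finite)
  then have "(\<integral>\<^sup>+x. exp (l * (f x - (\<integral>z. f z \<partial>PiM ({}::nat set) (\<lambda>_. D)))) \<partial>PiM {} (\<lambda>_. D))
      = (\<integral>\<^sup>+x. 1 \<partial>PiM ({}::nat set) (\<lambda>_. D))"
    by (intro nn_integral_cong) (auto simp: space_PiM)
  then show ?case by (simp add: P.emeasure_space_1)
next
  case (insert i I)
  interpret D: prob_space D by (rule D)
  interpret PS: product_sigma_finite "\<lambda>_. D"
    by (simp add: product_sigma_finite_def D.sigma_finite_measure_axioms)
  let ?P = "PiM I (\<lambda>_. D)"
  let ?P' = "PiM (insert i I) (\<lambda>_. D)"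
  interpret P: prob_space ?P by (rule prob_space_PiM) (use D in auto)
  interpret P': prob_space ?P' by (rule prob_space_PiM) (use D in auto)
  have fm[measurable]: "f \<in> borel_measurable ?P'" by fact
  have upd[measurable]: "(\<lambda>(x, y). x(i := y)) \<in> measurable (?P \<Otimes>\<^sub>M D) ?P'"
    using measurable_add_dim[of i I "\<lambda>_. D"] by simp
  have sp_upd: "x(i := y) \<in> space ?P'" if "x \<in> space ?P" "y \<in> space D" for x y
    using that by (auto simp: space_PiM PiE_def extensional_def Pi_def)
  define g where "g x = (\<integral>y. f (x(i := y)) \<partial>D)" for x
  have hm[measurable]: "(\<lambda>y. f (x(i := y))) \<in> borel_measurable D" if "x \<in> space ?P" for x
    using measurable_comp[OF measurable_component_update[OF that insert.hyps(2)] fm]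
    by (simp add: comp_def)
  have gm[measurable]: "g \<in> borel_measurable ?P"
    unfolding g_def using D.borel_measurable_lebesgue_integral[of "\<lambda>x y. f (x(i := y))"]
    by (simp add: case_prod_beta)
  have hb: "\<bar>f (x(i := y))\<bar> \<le> K" if "x \<in> space ?P" "y \<in> space D" for x y
    using insert.prems(2)[OF sp_upd[OF that]] .
  have gb: "\<bar>g x\<bar> \<le> K" if "x \<in> space ?P" for x
    unfolding g_def by (rule D.abs_integral_le_const[OF hm[OF that] hb[OF that]])
  have hint: "integrable D (\<lambda>y. f (x(i := y)))" if "x \<in> space ?P" for x
    using hb[OF that] hm[OF that] by (intro D.integrable_const_bound[where B=K]) auto
  have gd: "\<bar>g x - g (x(j := y'))\<bar> \<le> c" if x: "x \<in> space ?P" and j: "j \<in> I" and y': "y' \<in> space D"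
    for x j y'
  proof -
    have x': "x(j := y') \<in> space ?P" using x j y' by (auto simp: space_PiM PiE_def extensional_def Pi_def)
    have ij: "i \<noteq> j" using insert.hyps(2) j by auto
    have "g x - g (x(j := y')) = (\<integral>y. f (x(i := y)) - f ((x(i := y))(j := y')) \<partial>D)"
      unfolding g_def using hint[OF x] hint[OF x'] ij
      by (subst Bochner_Integration.integral_diff) (auto simp: fun_upd_twist)
    also have "\<bar>\<dots>\<bar> \<le> c"
    proof (rule D.abs_integral_le_const)
      show "(\<lambda>y. f (x(i := y)) - f ((x(i := y))(j := y'))) \<in> borel_measurable D"
        using hm[OF x] hm[OF x'] ij by (simp add: fun_upd_twist)
      show "\<bar>f (x(i := y)) - f ((x(i := y))(j := y'))\<bar> \<le> c" if "y \<in> space D" for y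
        by (rule insert.prems(3)[OF sp_upd[OF x that]]) (use j y' in auto)
    qed
    finally show ?thesis .
  qed
  have hoeffding: "(\<integral>\<^sup>+y. exp (l * (f (x(i := y)) - g x)) \<partial>D) \<le> ennreal (exp (l\<^sup>2 * c\<^sup>2 / 8))"
    if x: "x \<in> space ?P" for x
    unfolding g_def
  proof (rule D.Hoeffdings_lemma_oscillation[OF hm[OF x] _ l])
    fix y y' assume "y \<in> space D" "y' \<in> space D"
    then have "\<bar>f (x(i := y)) - f ((x(i := y))(i := y'))\<bar> \<le> c"
      by (intro insert.prems(3) sp_upd[OF x]) auto
    then show "\<bar>f (x(i := y)) - f (x(i := y'))\<bar> \<le> c" by simp
  qed
  define Ef where "Ef = (\<integral>z. f z \<partial>?P')"
  have Ef: "Ef = (\<integral>z. g z \<partial>?P)"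
    unfolding g_def Ef_def using insert.prems(2)
    by (intro PS.product_integral_insert[OF insert.hyps] P'.integrable_const_bound[where B=K]) auto
  have "(\<integral>\<^sup>+x. exp (l * (f x - Ef)) \<partial>?P')
      = (\<integral>\<^sup>+x. (\<integral>\<^sup>+y. exp (l * (g x - Ef)) * exp (l * (f (x(i := y)) - g x)) \<partial>D) \<partial>?P)"
    by (subst PS.product_nn_integral_insert[OF insert.hyps]) (simp_all add: algebra_simps flip: exp_add)
  also have "\<dots> \<le> (\<integral>\<^sup>+x. ennreal (exp (l * (g x - Ef))) * ennreal (exp (l\<^sup>2 * c\<^sup>2 / 8)) \<partial>?P)"
    by (intro nn_integral_mono)
       (simp add: ennreal_mult' nn_integral_cmult mult_left_mono hoeffding)
  also have "\<dots> = (\<integral>\<^sup>+x. ennreal (exp (l * (g x - Ef))) \<partial>?P) * ennreal (exp (l\<^sup>2 * c\<^sup>2 / 8))"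
    by (rule nn_integral_multc) measurable
  also have "\<dots> \<le> ennreal (exp (l\<^sup>2 * card I * c\<^sup>2 / 8)) * ennreal (exp (l\<^sup>2 * c\<^sup>2 / 8))"
    using insert.IH[OF gm gb gd] by (intro mult_right_mono) (auto simp: Ef)
  also have "\<dots> = ennreal (exp (l\<^sup>2 * card (insert i I) * c\<^sup>2 / 8))"
    using insert.hyps
    by (simp add: ennreal_mult'[symmetric] flip: exp_add; simp add: algebra_simps add_divide_distrib)
  finally show ?case by (simp add: Ef_def)
qed

lemma mcdiarmid_inequality:
  fixes D :: "'a measure" and f :: "(nat \<Rightarrow> 'a) \<Rightarrow> real" and c K t :: real
  assumes D: "prob_space D" and I: "finite I" "I \<noteq> {}"
    and f: "f \<in> borel_measurable (PiM I (\<lambda>_. D))"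
    and bnd: "\<And>x. x \<in> space (PiM I (\<lambda>_. D)) \<Longrightarrow> \<bar>f x\<bar> \<le> K"
    and bd: "\<And>x i y. x \<in> space (PiM I (\<lambda>_. D)) \<Longrightarrow> i \<in> I \<Longrightarrow> y \<in> space D \<Longrightarrow>
               \<bar>f x - f (x(i := y))\<bar> \<le> c"
    and t: "t > 0" and c: "c > 0"
  shows "measure (PiM I (\<lambda>_. D)) {x \<in> space (PiM I (\<lambda>_. D)). f x \<ge> (\<integral>z. f z \<partial>PiM I (\<lambda>_. D)) + t}
           \<le> exp (- 2 * t\<^sup>2 / (card I * c\<^sup>2))"
proof -
  let ?P = "PiM I (\<lambda>_. D)"
  interpret P: prob_space ?P by (rule prob_space_PiM) (use D in auto)
  define Ef where "Ef = (\<integral>z. f z \<partial>?P)"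
  define d where "d = real (card I) * c\<^sup>2"
  have d: "d > 0" using I c by (simp add: d_def card_gt_0_iff)
  define l where "l = 4 * t / d"
  have l: "l > 0" using t d by (simp add: l_def)
  have [measurable]: "f \<in> borel_measurable ?P" by fact
  have "ennreal (measure ?P {x \<in> space ?P. f x \<ge> Ef + t}) = emeasure ?P {x \<in> space ?P. f x - Ef \<ge> t}"
    by (simp add: P.emeasure_eq_measure add.commute le_diff_eq)
  also have "\<dots> \<le> ennreal (exp (-l * t)) * (\<integral>\<^sup>+x. ennreal (exp (l * (f x - Ef))) * indicator (space ?P) x \<partial>?P)"
    by (intro Chernoff_ineq_nn_integral_ge l) auto
  also have "(\<integral>\<^sup>+x. ennreal (exp (l * (f x - Ef))) * indicator (space ?P) x \<partial>?P)
      = (\<integral>\<^sup>+x. ennreal (exp (l * (f x - Ef))) \<partial>?P)"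
    by (intro nn_integral_cong) auto
  also have "\<dots> \<le> ennreal (exp (l\<^sup>2 * card I * c\<^sup>2 / 8))"
    using mcdiarmid_mgf_le[OF D I(1) f bnd bd l] by (simp add: Ef_def)
  finally have "ennreal (measure ?P {x \<in> space ?P. f x \<ge> Ef + t})
      \<le> ennreal (exp (-l * t) * exp (l\<^sup>2 * card I * c\<^sup>2 / 8))"
    by (simp add: mult_left_mono ennreal_mult)
  moreover have "-l * t + l\<^sup>2 * card I * c\<^sup>2 / 8 = - 2 * t\<^sup>2 / d"
    using d by (simp add: l_def d_def field_simps power2_eq_square)
  ultimately show ?thesis by (simp add: Ef_def d_def flip: exp_add)
qed

section \<open>Symmetrization\<close>

lemma distr_PiM_reindex:
  fixes D :: "'a measure"
  assumes D: "prob_space D" and K: "finite K" and \<pi>: "bij_betw \<pi> K K"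
  shows "distr (PiM K (\<lambda>_. D)) (PiM K (\<lambda>_. D)) (\<lambda>\<omega>. \<lambda>k\<in>K. \<omega> (\<pi> k)) = PiM K (\<lambda>_. D)"
proof -
  interpret D: prob_space D by (rule D)
  interpret PS: product_sigma_finite "\<lambda>_::'i. D"
    by (simp add: product_sigma_finite_def D.sigma_finite_measure_axioms)
  have meas: "(\<lambda>\<omega>. \<lambda>k\<in>K. \<omega> (\<pi> k)) \<in> measurable (PiM K (\<lambda>_. D)) (PiM K (\<lambda>_. D))"
    using \<pi> by (intro measurable_restrict measurable_component_singleton) (auto simp: bij_betw_def)
  define \<rho> where "\<rho> = inv_into K \<pi>"
  have \<rho>: "bij_betw \<rho> K K" unfolding \<rho>_def by (rule bij_betw_inv_into[OF \<pi>])
  have \<pi>\<rho>: "\<pi> (\<rho> k) = k" "\<rho> (\<pi> k) = k" "\<pi> k \<in> K" "\<rho> k \<in> K" if "k \<in> K" for k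
    using that \<pi> \<rho> unfolding \<rho>_def
    by (simp_all add: bij_betw_inv_into_right bij_betw_inv_into_left bij_betw_apply)
  show ?thesis
  proof (rule PS.PiM_eqI[OF K])
    fix A assume A: "\<And>i. i \<in> K \<Longrightarrow> A i \<in> sets D"
    have Asp: "A i \<subseteq> space D" if "i \<in> K" for i using A[OF that] sets.sets_into_space by auto
    have pre: "(\<lambda>\<omega>. \<lambda>k\<in>K. \<omega> (\<pi> k)) -` PiE K A \<inter> space (PiM K (\<lambda>_. D)) = PiE K (\<lambda>k. A (\<rho> k))"
    proof (intro equalityI subsetI)
      fix \<omega> assume \<omega>: "\<omega> \<in> (\<lambda>\<omega>. \<lambda>k\<in>K. \<omega> (\<pi> k)) -` PiE K A \<inter> space (PiM K (\<lambda>_. D))"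
      show "\<omega> \<in> PiE K (\<lambda>k. A (\<rho> k))"
      proof (rule PiE_I)
        fix k assume k: "k \<in> K"
        have "(\<lambda>k\<in>K. \<omega> (\<pi> k)) (\<rho> k) \<in> A (\<rho> k)" using \<omega> \<pi>\<rho>[OF k] by (auto simp: PiE_def Pi_def)
        then show "\<omega> k \<in> A (\<rho> k)" using \<pi>\<rho>[OF k] by simp
      next
        fix k assume "k \<notin> K"
        then show "\<omega> k = undefined" using \<omega> by (auto simp: space_PiM PiE_def extensional_def)
      qed
    next
      fix \<omega> assume \<omega>: "\<omega> \<in> PiE K (\<lambda>k. A (\<rho> k))"
      have "\<omega> \<in> space (PiM K (\<lambda>_. D))"
        using \<omega> Asp \<pi>\<rho> unfolding space_PiM by (force simp: PiE_def Pi_def)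
      moreover have "(\<lambda>k\<in>K. \<omega> (\<pi> k)) \<in> PiE K A"
        using \<omega> \<pi>\<rho> by (fastforce simp: PiE_def Pi_def)
      ultimately show "\<omega> \<in> (\<lambda>\<omega>. \<lambda>k\<in>K. \<omega> (\<pi> k)) -` PiE K A \<inter> space (PiM K (\<lambda>_. D))" by simp
    qed
    have "emeasure (distr (PiM K (\<lambda>_. D)) (PiM K (\<lambda>_. D)) (\<lambda>\<omega>. \<lambda>k\<in>K. \<omega> (\<pi> k))) (PiE K A)
        = emeasure (PiM K (\<lambda>_. D)) (PiE K (\<lambda>k. A (\<rho> k)))"
      using A by (subst emeasure_distr[OF meas]) (auto simp: pre intro!: sets_PiM_I_finite K)
    also have "\<dots> = (\<Prod>k\<in>K. emeasure D (A (\<rho> k)))"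
      using A \<pi>\<rho> by (subst PS.emeasure_PiM[OF K]) auto
    also have "\<dots> = (\<Prod>k\<in>K. emeasure D (A k))"
      using prod.reindex_bij_betw[OF \<rho>, of "\<lambda>k. emeasure D (A k)"] by simp
    finally show "emeasure (distr (PiM K (\<lambda>_. D)) (PiM K (\<lambda>_. D)) (\<lambda>\<omega>. \<lambda>k\<in>K. \<omega> (\<pi> k))) (PiE K A)
        = (\<Prod>k\<in>K. emeasure D (A k))" .
  qed simp
qed

lemma integral_PiM_component:
  fixes D :: "'a measure" and h :: "'a \<Rightarrow> real"
  assumes D: "prob_space D" and J: "finite J" "k \<in> J"
    and h: "h \<in> borel_measurable D" and hb: "\<And>z. z \<in> space D \<Longrightarrow> \<bar>h z\<bar> \<le> B"
  shows "(\<integral>y. h (y k) \<partial>PiM J (\<lambda>_. D)) = (\<integral>z. h z \<partial>D)"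
proof -
  interpret D: prob_space D by (rule D)
  interpret PS: product_sigma_finite "\<lambda>_::'i. D"
    by (simp add: product_sigma_finite_def D.sigma_finite_measure_axioms)
  interpret P: prob_space "PiM (J - {k}) (\<lambda>_. D)" by (rule prob_space_PiM) (use D in auto)
  interpret PJ: prob_space "PiM J (\<lambda>_. D)" by (rule prob_space_PiM) (use D in auto)
  have Jk: "J = insert k (J - {k})" using J by auto
  have "integrable (PiM J (\<lambda>_. D)) (\<lambda>y. h (y k))"
    using hb J measurable_compose[OF measurable_component_singleton[OF J(2)] h]
    by (intro PJ.integrable_const_bound[where B=B]) (auto simp: space_PiM PiE_def Pi_def)
  then have "integrable (PiM (insert k (J - {k})) (\<lambda>_. D)) (\<lambda>y. h (y k))"
    using Jk by simp
  then have "(\<integral>y. h (y k) \<partial>PiM (insert k (J - {k})) (\<lambda>_. D))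
      = (\<integral>x. (\<integral>y. h ((x(k := y)) k) \<partial>D) \<partial>PiM (J - {k}) (\<lambda>_. D))"
    by (intro PS.product_integral_insert) (use J in auto)
  then show ?thesis using Jk by (simp add: P.prob_space)
qed

lemma abs_Max_le:
  assumes "finite J" "J \<noteq> {}" "\<And>j. j \<in> J \<Longrightarrow> \<bar>f j\<bar> \<le> (C::real)"
  shows "\<bar>Max (f ` J)\<bar> \<le> C"
  using obtains_MAX[OF assms(1,2), of f] assms(3) by metis

lemma Max_add_le:
  fixes f h :: "'j \<Rightarrow> real"
  assumes "finite J" "J \<noteq> {}"
  shows "Max ((\<lambda>j. f j + h j) ` J) \<le> Max (f ` J) + Max (h ` J)"
  using assms by (subst Max_le_iff) (auto intro: add_mono Max_ge)

lemma abs_Max_diff_le: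
  fixes f h :: "'j \<Rightarrow> real"
  assumes J: "finite J" "J \<noteq> {}" and fh: "\<And>j. j \<in> J \<Longrightarrow> \<bar>f j - h j\<bar> \<le> C"
  shows "\<bar>Max (f ` J) - Max (h ` J)\<bar> \<le> C"
proof -
  obtain j1 where j1: "j1 \<in> J" "Max (f ` J) = f j1" using obtains_MAX[OF J, of f] by blast
  obtain j2 where j2: "j2 \<in> J" "Max (h ` J) = h j2" using obtains_MAX[OF J, of h] by blast
  have "f j2 \<le> Max (f ` J)" "h j1 \<le> Max (h ` J)" using J j1(1) j2(1) by (intro Max_ge; simp)+
  then show ?thesis using fh[OF j1(1)] fh[OF j2(1)] unfolding j1(2) j2(2) by (simp add: abs_le_iff)
qed

text \<open>In the ghost version the first n coordinates of omega are the sample and the next n an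
  independent copy of it.\<close>

definition sup_deviation :: "'z measure \<Rightarrow> nat \<Rightarrow> ('j \<Rightarrow> 'z \<Rightarrow> real) \<Rightarrow> 'j set \<Rightarrow> (nat \<Rightarrow> 'z) \<Rightarrow> real"
  where "sup_deviation D n g J S = Max ((\<lambda>j. (\<integral>z. g j z \<partial>D) - (1 / n) * (\<Sum>i<n. g j (S i))) ` J)"

definition ghost_deviation :: "nat \<Rightarrow> ('j \<Rightarrow> 'z \<Rightarrow> real) \<Rightarrow> 'j set \<Rightarrow> (nat \<Rightarrow> 'z) \<Rightarrow> real"
  where "ghost_deviation n g J \<omega> = (1 / n) * Max ((\<lambda>j. \<Sum>i<n. g j (\<omega> (n + i)) - g j (\<omega> i)) ` J)"

locale finite_function_class =
  fixes D :: "'z measure" and g :: "'j \<Rightarrow> 'z \<Rightarrow> real" and J :: "'j set" and n :: nat and B :: real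
  assumes D: "prob_space D" and n: "n > 0" and J: "finite J" "J \<noteq> {}"
    and g_measurable: "\<And>j. j \<in> J \<Longrightarrow> g j \<in> borel_measurable D"
    and g_bounded: "\<And>j z. j \<in> J \<Longrightarrow> z \<in> space D \<Longrightarrow> \<bar>g j z\<bar> \<le> B"
begin

lemma space_PiM_component: "\<omega> \<in> space (PiM K (\<lambda>_. D)) \<Longrightarrow> k \<in> K \<Longrightarrow> \<omega> k \<in> space D"
  by (auto simp: space_PiM PiE_def Pi_def)

lemma component_measurable:
  assumes "j \<in> J" "k \<in> K"
  shows "(\<lambda>\<omega>. g j (\<omega> k)) \<in> borel_measurable (PiM K (\<lambda>_. D))"
  by (rule measurable_compose[OF measurable_component_singleton[OF assms(2)] g_measurable[OF assms(1)]])

lemma sup_deviation_measurable: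
  "{..<n} \<subseteq> K \<Longrightarrow> sup_deviation D n g J \<in> borel_measurable (PiM K (\<lambda>_. D))"
  unfolding sup_deviation_def using J
  by (intro borel_measurable_Max borel_measurable_times borel_measurable_const borel_measurable_sum
        borel_measurable_diff component_measurable) auto

lemma sup_deviation_bounded:
  assumes S: "\<And>i. i < n \<Longrightarrow> S i \<in> space D"
  shows "\<bar>sup_deviation D n g J S\<bar> \<le> 2 * B"
  unfolding sup_deviation_def
proof (rule abs_Max_le[OF J])
  interpret D: prob_space D by (rule D)
  fix j assume j: "j \<in> J"
  have E: "\<bar>\<integral>z. g j z \<partial>D\<bar> \<le> B"
    by (rule D.abs_integral_le_const[OF g_measurable[OF j] g_bounded[OF j]])
  have "\<bar>\<Sum>i<n. g j (S i)\<bar> \<le> (\<Sum>i<n. \<bar>g j (S i)\<bar>)" by (rule sum_abs)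
  also have "\<dots> \<le> (\<Sum>i<n. B)" using g_bounded[OF j S] by (intro sum_mono) auto
  finally have "\<bar>(1 / n) * (\<Sum>i<n. g j (S i))\<bar> \<le> B" using n by (simp add: abs_mult field_simps)
  then show "\<bar>(\<integral>z. g j z \<partial>D) - (1 / n) * (\<Sum>i<n. g j (S i))\<bar> \<le> 2 * B" using E by linarith
qed

lemma sup_deviation_bounded_difference:
  assumes S: "\<And>i. i < n \<Longrightarrow> S i \<in> space D" and i: "i < n" and y: "y \<in> space D"
  shows "\<bar>sup_deviation D n g J S - sup_deviation D n g J (S(i := y))\<bar> \<le> 2 * B / n"
  unfolding sup_deviation_def
proof (rule abs_Max_diff_le[OF J])
  fix j assume j: "j \<in> J"
  have "(\<Sum>k<n. g j ((S(i := y)) k)) = (\<Sum>k<n. g j (S k) + (if k = i then g j y - g j (S i) else 0))"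
    by (intro sum.cong) auto
  also have "\<dots> = (\<Sum>k<n. g j (S k)) + (g j y - g j (S i))"
    using i by (simp add: sum.distrib)
  finally have sum_upd: "(\<Sum>k<n. g j ((S(i := y)) k)) = (\<Sum>k<n. g j (S k)) + (g j y - g j (S i))" .
  have "((\<integral>z. g j z \<partial>D) - (1 / n) * (\<Sum>k<n. g j (S k)))
      - ((\<integral>z. g j z \<partial>D) - (1 / n) * (\<Sum>k<n. g j ((S(i := y)) k))) = (g j y - g j (S i)) / n"
    unfolding sum_upd using n by (simp add: field_simps)
  then have "\<bar>((\<integral>z. g j z \<partial>D) - (1 / n) * (\<Sum>k<n. g j (S k)))
      - ((\<integral>z. g j z \<partial>D) - (1 / n) * (\<Sum>k<n. g j ((S(i := y)) k)))\<bar> = \<bar>g j y - g j (S i)\<bar> / n"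
    by simp
  also have "\<dots> \<le> 2 * B / n"
    using g_bounded[OF j y] g_bounded[OF j S[OF i]] n by (intro divide_right_mono) auto
  finally show "\<bar>((\<integral>z. g j z \<partial>D) - (1 / n) * (\<Sum>k<n. g j (S k)))
      - ((\<integral>z. g j z \<partial>D) - (1 / n) * (\<Sum>k<n. g j ((S(i := y)) k)))\<bar> \<le> 2 * B / n" .
qed

lemma ghost_deviation_measurable:
  "ghost_deviation n g J \<in> borel_measurable (PiM {..<2*n} (\<lambda>_. D))"
  unfolding ghost_deviation_def using J
  by (intro borel_measurable_times borel_measurable_const borel_measurable_Max borel_measurable_sum
        borel_measurable_diff component_measurable) auto

lemma ghost_deviation_bounded:
  assumes \<omega>: "\<omega> \<in> space (PiM {..<2*n} (\<lambda>_. D))"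
  shows "\<bar>ghost_deviation n g J \<omega>\<bar> \<le> 2 * B"
proof -
  have "\<bar>g j (\<omega> (n + i)) - g j (\<omega> i)\<bar> \<le> 2 * B" if "j \<in> J" "i < n" for j i
    using g_bounded[OF that(1) space_PiM_component[OF \<omega>, of "n + i"]]
      g_bounded[OF that(1) space_PiM_component[OF \<omega>, of i]] that(2) by auto
  then have "\<bar>\<Sum>i<n. g j (\<omega> (n + i)) - g j (\<omega> i)\<bar> \<le> (\<Sum>i<n. 2 * B)" if "j \<in> J" for j
    using that by (intro order.trans[OF sum_abs sum_mono]) auto
  then have "\<bar>\<Sum>i<n. g j (\<omega> (n + i)) - g j (\<omega> i)\<bar> \<le> n * (2 * B)" if "j \<in> J" for j
    using that by simp
  then have "\<bar>Max ((\<lambda>j. \<Sum>i<n. g j (\<omega> (n + i)) - g j (\<omega> i)) ` J)\<bar> \<le> n * (2 * B)"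
    by (rule abs_Max_le[OF J])
  then show ?thesis using n unfolding ghost_deviation_def by (simp add: abs_mult field_simps)
qed

lemma integrable_ghost_deviation:
  assumes f: "f \<in> measurable M (PiM {..<2*n} (\<lambda>_. D))" and "finite_measure M"
  shows "integrable M (\<lambda>x. ghost_deviation n g J (f x))"
  using assms ghost_deviation_bounded measurable_space[OF f]
    measurable_comp[OF f ghost_deviation_measurable]
  by (intro finite_measure.integrable_const_bound[where B="2*B"]) (auto simp: comp_def)

end

definition swap_halves :: "nat \<Rightarrow> (nat \<Rightarrow> real) \<Rightarrow> nat \<Rightarrow> nat" where
  "swap_halves n \<epsilon> k = (if k < n \<and> \<epsilon> k = -1 then k + n
     else if n \<le> k \<and> k < 2 * n \<and> \<epsilon> (k - n) = -1 then k - n else k)"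

lemma bij_swap_halves: "bij_betw (swap_halves n \<epsilon>) {..<2*n} {..<2*n}"
  by (rule bij_betw_byWitness[where f'="swap_halves n \<epsilon>"]) (auto simp: swap_halves_def)

context finite_function_class
begin

lemma ghost_merge_measurable:
  "(\<lambda>p. ghost_deviation n g J (merge {..<n} {n..<2*n} p))
     \<in> borel_measurable (PiM {..<n} (\<lambda>_. D) \<Otimes>\<^sub>M PiM {n..<2*n} (\<lambda>_. D))"
proof -
  have eq: "{..<n} \<union> {n..<2*n} = {..<2*n}" by auto
  show ?thesis
    using measurable_comp[OF measurable_merge[of "{..<n}" "{n..<2*n}" "\<lambda>_. D"]
        ghost_deviation_measurable[folded eq]]
    by (simp add: comp_def)
qed

lemma ghost_merge_bounded:
  assumes "x \<in> space (PiM {..<n} (\<lambda>_. D))" "y \<in> space (PiM {n..<2*n} (\<lambda>_. D))"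
  shows "\<bar>ghost_deviation n g J (merge {..<n} {n..<2*n} (x, y))\<bar> \<le> 2 * B"
  using assms
  by (intro ghost_deviation_bounded) (auto simp: space_PiM PiE_def Pi_def merge_def extensional_def)

lemma integrable_ghost_merge:
  assumes x: "x \<in> space (PiM {..<n} (\<lambda>_. D))"
  shows "integrable (PiM {n..<2*n} (\<lambda>_. D)) (\<lambda>y. ghost_deviation n g J (merge {..<n} {n..<2*n} (x, y)))"
proof -
  interpret N: prob_space "PiM {n..<2*n} (\<lambda>_. D)" by (rule prob_space_PiM) (use D in auto)
  show ?thesis
  proof (rule N.integrable_const_bound[where B="2*B"])
  show "AE y in PiM {n..<2*n} (\<lambda>_. D). norm (ghost_deviation n g J (merge {..<n} {n..<2*n} (x, y))) \<le> 2 * B"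
    using ghost_merge_bounded[OF x] by (intro AE_I2) simp
  show "(\<lambda>y. ghost_deviation n g J (merge {..<n} {n..<2*n} (x, y))) \<in> borel_measurable (PiM {n..<2*n} (\<lambda>_. D))"
    using measurable_comp[OF measurable_Pair1'[OF x] ghost_merge_measurable] by (simp add: comp_def)
  qed
qed

text \<open>Jensen: the population mean of g j is the mean over the ghost sample, and the supremum of
  expectations is at most the expectation of the supremum.\<close>

lemma sup_deviation_le_ghost_mean:
  assumes x: "x \<in> space (PiM {..<n} (\<lambda>_. D))"
  shows "sup_deviation D n g J x
           \<le> (\<integral>y. ghost_deviation n g J (merge {..<n} {n..<2*n} (x, y)) \<partial>PiM {n..<2*n} (\<lambda>_. D))"
proof -
  let ?N = "PiM {n..<2*n} (\<lambda>_. D)"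
  interpret N: prob_space ?N by (rule prob_space_PiM) (use D in auto)
  obtain j0 where j0: "j0 \<in> J" "sup_deviation D n g J x = (\<integral>z. g j0 z \<partial>D) - (1 / n) * (\<Sum>i<n. g j0 (x i))"
    using obtains_MAX[OF J, of "\<lambda>j. (\<integral>z. g j z \<partial>D) - (1 / n) * (\<Sum>i<n. g j (x i))"]
    unfolding sup_deviation_def by blast
  have ghost: "n + i \<in> {n..<2*n}" if "i < n" for i using that by simp
  have integrable_ghost: "integrable ?N (\<lambda>y. g j0 (y (n + i)))" if i: "i < n" for i
  proof (rule N.integrable_const_bound[where B=B])
    show "AE y in ?N. norm (g j0 (y (n + i))) \<le> B"
      using g_bounded[OF j0(1) space_PiM_component, OF _ ghost[OF i]] by (intro AE_I2) simp
    show "(\<lambda>y. g j0 (y (n + i))) \<in> borel_measurable ?N"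
      by (rule component_measurable[OF j0(1) ghost[OF i]])
  qed
  have "(\<integral>y. g j0 (y (n + i)) - g j0 (x i) \<partial>?N) = (\<integral>z. g j0 z \<partial>D) - g j0 (x i)" if i: "i < n" for i
    using integrable_ghost[OF i]
      integral_PiM_component[OF D _ ghost[OF i] g_measurable[OF j0(1)] g_bounded[OF j0(1)]]
    by (subst Bochner_Integration.integral_diff) (simp_all add: N.prob_space N.emeasure_space_1)
  then have "(\<integral>y. (1 / n) * (\<Sum>i<n. g j0 (y (n + i)) - g j0 (x i)) \<partial>?N)
      = (1 / n) * (\<Sum>i<n. (\<integral>z. g j0 z \<partial>D) - g j0 (x i))"
    using integrable_ghost by (simp add: Bochner_Integration.integral_sum)
  also have "\<dots> = sup_deviation D n g J x" using n j0 by (simp add: sum_subtractf field_simps)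
  finally have "sup_deviation D n g J x = (\<integral>y. (1 / n) * (\<Sum>i<n. g j0 (y (n + i)) - g j0 (x i)) \<partial>?N)" ..
  also have "\<dots> \<le> (\<integral>y. ghost_deviation n g J (merge {..<n} {n..<2*n} (x, y)) \<partial>?N)"
  proof (rule integral_mono[OF _ integrable_ghost_merge[OF x]])
    show "integrable ?N (\<lambda>y. (1 / n) * (\<Sum>i<n. g j0 (y (n + i)) - g j0 (x i)))"
      using integrable_ghost
      by (intro integrable_mult_right integrable_sum Bochner_Integration.integrable_diff integrable_const)
         auto
    fix y
    have "merge {..<n} {n..<2*n} (x, y) (n + i) = y (n + i)" "merge {..<n} {n..<2*n} (x, y) i = x i"
      if "i < n" for i
      using that by (auto simp: merge_def)
    then have "(\<Sum>i<n. g j0 (y (n + i)) - g j0 (x i)) \<le> Max ((\<lambda>j. \<Sum>i<n.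
        g j (merge {..<n} {n..<2*n} (x, y) (n + i)) - g j (merge {..<n} {n..<2*n} (x, y) i)) ` J)"
      using J j0(1) by (intro Max_ge) (auto intro!: image_eqI[where x=j0] sum.cong)
    then show "(1 / n) * (\<Sum>i<n. g j0 (y (n + i)) - g j0 (x i))
        \<le> ghost_deviation n g J (merge {..<n} {n..<2*n} (x, y))"
      unfolding ghost_deviation_def using n by (intro mult_left_mono) auto
  qed
  finally show ?thesis .
qed

lemma expected_sup_deviation_le_ghost:
  "(\<integral>S. sup_deviation D n g J S \<partial>PiM {..<n} (\<lambda>_. D))
     \<le> (\<integral>\<omega>. ghost_deviation n g J \<omega> \<partial>PiM {..<2*n} (\<lambda>_. D))"
proof -
  interpret D: prob_space D by (rule D)
  interpret PS: product_sigma_finite "\<lambda>_::nat. D"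
    by (simp add: product_sigma_finite_def D.sigma_finite_measure_axioms)
  let ?M = "PiM {..<n} (\<lambda>_. D)" and ?N = "PiM {n..<2*n} (\<lambda>_. D)"
  let ?G = "ghost_deviation n g J"
  interpret M: prob_space ?M by (rule prob_space_PiM) (use D in auto)
  interpret N: prob_space ?N by (rule prob_space_PiM) (use D in auto)
  interpret P: prob_space "PiM {..<2*n} (\<lambda>_. D)" by (rule prob_space_PiM) (use D in auto)
  have "(\<integral>S. sup_deviation D n g J S \<partial>?M) \<le> (\<integral>x. (\<integral>y. ?G (merge {..<n} {n..<2*n} (x, y)) \<partial>?N) \<partial>?M)"
  proof (intro integral_mono sup_deviation_le_ghost_mean)
    show "integrable ?M (sup_deviation D n g J)"
    proof (rule M.integrable_const_bound[where B="2*B"])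
      show "AE S in ?M. norm (sup_deviation D n g J S) \<le> 2 * B"
      proof (rule AE_I2)
        fix S assume S: "S \<in> space ?M"
        have "\<bar>sup_deviation D n g J S\<bar> \<le> 2 * B"
          using space_PiM_component[OF S] by (intro sup_deviation_bounded) simp
        then show "norm (sup_deviation D n g J S) \<le> 2 * B" by simp
      qed
    qed (rule sup_deviation_measurable, simp)
    show "integrable ?M (\<lambda>x. \<integral>y. ?G (merge {..<n} {n..<2*n} (x, y)) \<partial>?N)"
    proof (rule M.integrable_const_bound[where B="2*B"])
      show "AE x in ?M. norm (\<integral>y. ?G (merge {..<n} {n..<2*n} (x, y)) \<partial>?N) \<le> 2 * B"
      proof (rule AE_I2)
        fix x assume x: "x \<in> space ?M"
        have "(\<lambda>y. ?G (merge {..<n} {n..<2*n} (x, y))) \<in> borel_measurable ?N"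
          using measurable_comp[OF measurable_Pair1'[OF x] ghost_merge_measurable] by (simp add: comp_def)
        then show "norm (\<integral>y. ?G (merge {..<n} {n..<2*n} (x, y)) \<partial>?N) \<le> 2 * B"
          using N.abs_integral_le_const[OF _ ghost_merge_bounded[OF x]] by simp
      qed
      show "(\<lambda>x. \<integral>y. ?G (merge {..<n} {n..<2*n} (x, y)) \<partial>?N) \<in> borel_measurable ?M"
        using N.borel_measurable_lebesgue_integral[of "\<lambda>x y. ?G (merge {..<n} {n..<2*n} (x, y))"]
          ghost_merge_measurable by simp
    qed
  qed
  also have "\<dots> = (\<integral>\<omega>. ?G \<omega> \<partial>PiM ({..<n} \<union> {n..<2*n}) (\<lambda>_. D))"
  proof (rule PS.product_integral_fold[symmetric])
    have "{..<n} \<union> {n..<2*n} = {..<2*n}" by auto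
    then show "integrable (PiM ({..<n} \<union> {n..<2*n}) (\<lambda>_. D)) ?G"
      using integrable_ghost_deviation[OF measurable_ident_sets[OF refl]] P.finite_measure_axioms by simp
  qed auto
  also have "{..<n} \<union> {n..<2*n} = {..<2*n}" by auto
  finally show ?thesis .
qed

text \<open>Swapping sample and ghost points preserves the product measure, so averaging over all
  sign patterns turns the ghost deviation into two Rademacher averages.\<close>

lemma expected_ghost_deviation_le:
  assumes rad: "\<And>z. (\<And>i. i < n \<Longrightarrow> z i \<in> space D) \<Longrightarrow>
      (\<Sum>\<epsilon>\<in>rademacher_signs n. Max ((\<lambda>j. \<Sum>i<n. \<epsilon> i * g j (z i)) ` J)) \<le> 2 ^ n * (n * (R::real))"
  shows "(\<integral>\<omega>. ghost_deviation n g J \<omega> \<partial>PiM {..<2*n} (\<lambda>_. D)) \<le> 2 * R"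
proof -
  let ?P = "PiM {..<2*n} (\<lambda>_. D)"
  let ?G = "ghost_deviation n g J"
  interpret P: prob_space ?P by (rule prob_space_PiM) (use D in auto)
  define sw where "sw \<epsilon> \<omega> = (\<lambda>k\<in>{..<2*n}. \<omega> (swap_halves n \<epsilon> k))" for \<epsilon> and \<omega> :: "nat \<Rightarrow> 'z"
  have sw_measurable: "sw \<epsilon> \<in> measurable ?P ?P" for \<epsilon>
    unfolding sw_def using bij_swap_halves[of n \<epsilon>]
    by (intro measurable_restrict measurable_component_singleton) (auto simp: bij_betw_def)
  have swap_invariant: "(\<integral>\<omega>. ?G \<omega> \<partial>?P) = (\<integral>\<omega>. ?G (sw \<epsilon> \<omega>) \<partial>?P)" for \<epsilon>
  proof -
    have "distr ?P ?P (sw \<epsilon>) = ?P"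
      unfolding sw_def by (rule distr_PiM_reindex[OF D _ bij_swap_halves]) simp
    then have "(\<integral>\<omega>. ?G \<omega> \<partial>?P) = (\<integral>\<omega>. ?G \<omega> \<partial>distr ?P ?P (sw \<epsilon>))" by simp
    also have "\<dots> = (\<integral>\<omega>. ?G (sw \<epsilon> \<omega>) \<partial>?P)"
      by (rule integral_distr[OF sw_measurable ghost_deviation_measurable])
    finally show ?thesis .
  qed
  have swap_signs: "?G (sw \<epsilon> \<omega>) = (1 / n) * Max ((\<lambda>j. \<Sum>i<n. \<epsilon> i * (g j (\<omega> (n + i)) - g j (\<omega> i))) ` J)"
    if e: "\<epsilon> \<in> rademacher_signs n" for \<epsilon> \<omega>
  proof -
    have "g j (sw \<epsilon> \<omega> (n + i)) - g j (sw \<epsilon> \<omega> i) = \<epsilon> i * (g j (\<omega> (n + i)) - g j (\<omega> i))"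
      if "i < n" for i j
      using rademacher_signs_values[OF e that] that by (auto simp: sw_def swap_halves_def add.commute)
    then show ?thesis unfolding ghost_deviation_def by simp
  qed
  have "(\<integral>\<omega>. ?G \<omega> \<partial>?P) = (1 / 2 ^ n) * (\<Sum>\<epsilon>\<in>rademacher_signs n. (\<integral>\<omega>. ?G (sw \<epsilon> \<omega>) \<partial>?P))"
    by (simp add: card_rademacher_signs flip: swap_invariant)
  also have "\<dots> = (\<integral>\<omega>. (1 / 2 ^ n) * (\<Sum>\<epsilon>\<in>rademacher_signs n. ?G (sw \<epsilon> \<omega>)) \<partial>?P)"
    using integrable_ghost_deviation[OF sw_measurable] P.finite_measure_axioms
    by (simp add: Bochner_Integration.integral_sum finite_measure_def)
  also have "\<dots> \<le> (\<integral>\<omega>. 2 * R \<partial>?P)"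
  proof (rule integral_mono)
    show "integrable ?P (\<lambda>\<omega>. (1 / 2 ^ n) * (\<Sum>\<epsilon>\<in>rademacher_signs n. ?G (sw \<epsilon> \<omega>)))"
      using integrable_ghost_deviation[OF sw_measurable] P.finite_measure_axioms by auto
    fix \<omega> assume \<omega>: "\<omega> \<in> space ?P"
    define a where "a j i = g j (\<omega> (n + i))" for j i
    define b where "b j i = g j (\<omega> i)" for j i
    let ?rad = "\<lambda>c. \<Sum>\<epsilon>\<in>rademacher_signs n. Max ((\<lambda>j. \<Sum>i<n. \<epsilon> i * c j i) ` J)"
    have "?rad a \<le> 2 ^ n * (n * (R::real))" "?rad b \<le> 2 ^ n * (n * (R::real))"
      unfolding a_def b_def by (intro rad space_PiM_component[OF \<omega>]; simp)+
    have "(\<Sum>\<epsilon>\<in>rademacher_signs n. ?G (sw \<epsilon> \<omega>))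
        = (1 / n) * (\<Sum>\<epsilon>\<in>rademacher_signs n.
            Max ((\<lambda>j. (\<Sum>i<n. \<epsilon> i * a j i) + (\<Sum>i<n. flip_signs n \<epsilon> i * b j i)) ` J))"
      using swap_signs by (simp add: sum_distrib_left a_def b_def flip_signs_def algebra_simps
          sum.distrib sum_negf sum_subtractf)
    also have "\<dots> \<le> (1 / n) * (\<Sum>\<epsilon>\<in>rademacher_signs n. Max ((\<lambda>j. \<Sum>i<n. \<epsilon> i * a j i) ` J)
                                  + Max ((\<lambda>j. \<Sum>i<n. flip_signs n \<epsilon> i * b j i) ` J))"
      using n by (intro mult_left_mono sum_mono Max_add_le[OF J]) auto
    also have "\<dots> = (1 / n) * (?rad a + ?rad b)"
      by (simp add: sum.distrib sum_rademacher_signs_flip[symmetric,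
            of "\<lambda>\<epsilon>. Max ((\<lambda>j. \<Sum>i<n. \<epsilon> i * b j i) ` J)"])
    also have "\<dots> \<le> (1 / n) * (2 ^ n * (n * R) + 2 ^ n * (n * R))"
      using \<open>?rad a \<le> _\<close> \<open>?rad b \<le> _\<close> n by (intro mult_left_mono add_mono) auto
    also have "\<dots> = 2 ^ n * (2 * R)" using n by (simp add: field_simps)
    finally show "(1 / 2 ^ n) * (\<Sum>\<epsilon>\<in>rademacher_signs n. ?G (sw \<epsilon> \<omega>)) \<le> 2 * R"
      by (simp add: field_simps)
  qed simp
  finally show ?thesis by (simp add: P.prob_space)
qed

lemma expected_sup_deviation_le:
  assumes "\<And>z. (\<And>i. i < n \<Longrightarrow> z i \<in> space D) \<Longrightarrow>
      (\<Sum>\<epsilon>\<in>rademacher_signs n. Max ((\<lambda>j. \<Sum>i<n. \<epsilon> i * g j (z i)) ` J)) \<le> 2 ^ n * (n * (R::real))"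
  shows "(\<integral>S. sup_deviation D n g J S \<partial>PiM {..<n} (\<lambda>_. D)) \<le> 2 * R"
  using assms by (rule order_trans[OF expected_sup_deviation_le_ghost expected_ghost_deviation_le])

lemma sup_deviation_tail_bound:
  assumes rad: "\<And>z. (\<And>i. i < n \<Longrightarrow> z i \<in> space D) \<Longrightarrow>
      (\<Sum>\<epsilon>\<in>rademacher_signs n. Max ((\<lambda>j. \<Sum>i<n. \<epsilon> i * g j (z i)) ` J)) \<le> 2 ^ n * (n * (R::real))"
    and B: "B > 0" and \<delta>: "0 < \<delta>" "\<delta> < 1"
  shows "measure (PiM {..<n} (\<lambda>_. D))
           {S \<in> space (PiM {..<n} (\<lambda>_. D)).
              sup_deviation D n g J S \<ge> 2 * R + B * sqrt (2 * ln (1 / \<delta>) / n)} \<le> \<delta>"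
proof -
  let ?M = "PiM {..<n} (\<lambda>_. D)"
  let ?\<Phi> = "sup_deviation D n g J"
  interpret M: prob_space ?M by (rule prob_space_PiM) (use D in auto)
  define t where "t = B * sqrt (2 * ln (1 / \<delta>) / n)"
  have lnd: "ln (1 / \<delta>) > 0" using \<delta> by simp
  have t: "t > 0" using B lnd n by (simp add: t_def)
  have "{S \<in> space ?M. ?\<Phi> S \<ge> 2 * R + t} \<subseteq> {S \<in> space ?M. ?\<Phi> S \<ge> (\<integral>S. ?\<Phi> S \<partial>?M) + t}"
    using expected_sup_deviation_le[OF rad] by auto
  then have "measure ?M {S \<in> space ?M. ?\<Phi> S \<ge> 2 * R + t}
      \<le> measure ?M {S \<in> space ?M. ?\<Phi> S \<ge> (\<integral>S. ?\<Phi> S \<partial>?M) + t}"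
    using sup_deviation_measurable[of "{..<n}"] by (intro M.finite_measure_mono) auto
  also have "\<dots> \<le> exp (- 2 * t\<^sup>2 / (card {..<n} * (2 * B / n)\<^sup>2))"
  proof (rule mcdiarmid_inequality[OF D _ _ sup_deviation_measurable])
    fix S assume S: "S \<in> space ?M"
    show "\<bar>?\<Phi> S\<bar> \<le> 2 * B"
      using S by (intro sup_deviation_bounded) (auto intro: space_PiM_component)
    show "\<bar>?\<Phi> S - ?\<Phi> (S(i := y))\<bar> \<le> 2 * B / n" if "i \<in> {..<n}" "y \<in> space D" for i y
      using S that by (intro sup_deviation_bounded_difference) (auto intro: space_PiM_component)
  qed (use n B t in auto)
  also have "- 2 * t\<^sup>2 / (card {..<n} * (2 * B / n)\<^sup>2) = - ln (1 / \<delta>)"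
    using n B lnd by (simp add: t_def power_mult_distrib power_divide field_simps power2_eq_square)
  also have "exp (- ln (1 / \<delta>)) = \<delta>" using \<delta> by (simp add: exp_minus)
  finally show ?thesis unfolding t_def .
qed

end

lemma rademacher_loss_network:
  fixes \<sigma> :: "real \<Rightarrow> real" and loss :: "real \<Rightarrow> 'b \<Rightarrow> real"
    and z :: "nat \<Rightarrow> (real^'d) \<times> 'b" and J :: "(nat \<Rightarrow> real \<times> (real^'d)) set"
  assumes sigma_lip: "\<And>s t. \<bar>\<sigma> s - \<sigma> t\<bar> \<le> \<bar>s - t\<bar>"
    and sigma_hom: "\<And>\<alpha> t. \<alpha> \<ge> 0 \<Longrightarrow> \<sigma> (\<alpha> * t) = \<alpha> * \<sigma> t"
    and loss_lip: "\<And>y s t. \<bar>loss s y - loss t y\<bar> \<le> A * \<bar>s - t\<bar>"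
    and J: "finite J" "J \<noteq> {}" and Q: "\<And>\<theta>. \<theta> \<in> J \<Longrightarrow> path_norm m \<theta> \<le> Q"
    and x: "\<And>i l. i < n \<Longrightarrow> \<bar>fst (z i) $ l\<bar> \<le> 1" and n: "n > 0"
  shows "(\<Sum>\<epsilon>\<in>rademacher_signs n. Max ((\<lambda>\<theta>. \<Sum>i<n. \<epsilon> i * loss (nn_out \<sigma> m \<theta> (fst (z i))) (snd (z i))) ` J))
         \<le> 2 ^ n * (n * (2 * A * Q * sqrt (2 * ln (2 * real CARD('d)) / n)))"
proof -
  have A0: "A \<ge> 0" using loss_lip[where y=undefined and s=1 and t=0] by simp
  let ?f = "\<lambda>\<epsilon> \<theta>. \<Sum>i<n. \<epsilon> i * nn_out \<sigma> m \<theta> (fst (z i))"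
  have Max_scale: "Max ((\<lambda>\<theta>. \<Sum>i<n. \<epsilon> i * (A * nn_out \<sigma> m \<theta> (fst (z i)))) ` J) = A * Max (?f \<epsilon> ` J)"
    for \<epsilon>
  proof -
    have "(\<lambda>\<theta>. \<Sum>i<n. \<epsilon> i * (A * nn_out \<sigma> m \<theta> (fst (z i)))) ` J = (*) A ` ?f \<epsilon> ` J"
      by (auto simp: sum_distrib_left mult_ac image_image)
    then show ?thesis
      using mono_Max_commute[of "(*) A" "?f \<epsilon> ` J"] J A0 by (simp add: mono_def mult_left_mono)
  qed
  have "(\<Sum>\<epsilon>\<in>rademacher_signs n. Max ((\<lambda>\<theta>. \<Sum>i<n. \<epsilon> i * loss (nn_out \<sigma> m \<theta> (fst (z i))) (snd (z i))) ` J))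
      \<le> (\<Sum>\<epsilon>\<in>rademacher_signs n. Max ((\<lambda>\<theta>. \<Sum>i<n. \<epsilon> i * (A * nn_out \<sigma> m \<theta> (fst (z i)))) ` J))"
    by (rule contraction_principle[OF J, where \<phi>="\<lambda>i t. loss t (snd (z i))"]) (rule loss_lip)
  also have "\<dots> = A * (\<Sum>\<epsilon>\<in>rademacher_signs n. Max (?f \<epsilon> ` J))"
    by (simp add: Max_scale sum_distrib_left)
  also have "\<dots> \<le> A * (2 ^ n * (2 * Q * (sqrt (2 * ln (2 * real CARD('d))) * sqrt n)))"
    by (intro mult_left_mono A0 rademacher_two_layer_network[OF sigma_lip sigma_hom J Q x n]) auto
  also have "\<dots> = 2 ^ n * (n * (2 * A * Q * sqrt (2 * ln (2 * real CARD('d)) / n)))"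
    using n by (simp add: real_sqrt_divide field_simps)
  finally show ?thesis .
qed

section \<open>Approximation by a countable family of networks\<close>

lemma neuron_diff_le:
  fixes a a' :: real and w w' x :: "real^'d"
  assumes sigma_lip: "\<And>s t. \<bar>\<sigma> s - \<sigma> t\<bar> \<le> \<bar>s - t\<bar>" and sigma0: "\<sigma> 0 = 0"
    and x: "\<And>l. \<bar>x $ l\<bar> \<le> 1"
  shows "\<bar>a * \<sigma> (w \<bullet> x) - a' * \<sigma> (w' \<bullet> x)\<bar> \<le> \<bar>a - a'\<bar> * l1norm w + \<bar>a'\<bar> * l1norm (w - w')"
proof -
  have s1: "\<bar>\<sigma> (w \<bullet> x)\<bar> \<le> l1norm w"
    using sigma_lip[of "w \<bullet> x" 0] sigma0 abs_inner_le_l1norm[OF x, of w] by simp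
  have s2: "\<bar>\<sigma> (w \<bullet> x) - \<sigma> (w' \<bullet> x)\<bar> \<le> l1norm (w - w')"
    using sigma_lip[of "w \<bullet> x" "w' \<bullet> x"] abs_inner_le_l1norm[OF x, of "w - w'"]
    by (simp add: inner_diff_left)
  have "a * \<sigma> (w \<bullet> x) - a' * \<sigma> (w' \<bullet> x)
      = (a - a') * \<sigma> (w \<bullet> x) + a' * (\<sigma> (w \<bullet> x) - \<sigma> (w' \<bullet> x))"
    by (simp add: algebra_simps)
  also have "\<bar>\<dots>\<bar> \<le> \<bar>a - a'\<bar> * \<bar>\<sigma> (w \<bullet> x)\<bar> + \<bar>a'\<bar> * \<bar>\<sigma> (w \<bullet> x) - \<sigma> (w' \<bullet> x)\<bar>"
    using abs_triangle_ineq[of "(a - a') * \<sigma> (w \<bullet> x)" "a' * (\<sigma> (w \<bullet> x) - \<sigma> (w' \<bullet> x))"]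
    by (simp add: abs_mult)
  also have "\<dots> \<le> \<bar>a - a'\<bar> * l1norm w + \<bar>a'\<bar> * l1norm (w - w')"
    using s1 s2 by (intro add_mono mult_left_mono) auto
  finally show ?thesis .
qed

lemma path_norm_term_diff_le:
  fixes a a' :: real and w w' :: "real^'d"
  shows "\<bar>\<bar>a\<bar> * l1norm w - \<bar>a'\<bar> * l1norm w'\<bar> \<le> \<bar>a - a'\<bar> * l1norm w + \<bar>a'\<bar> * l1norm (w - w')"
proof -
  have "\<bar>a\<bar> * l1norm w - \<bar>a'\<bar> * l1norm w'
      = (\<bar>a\<bar> - \<bar>a'\<bar>) * l1norm w + \<bar>a'\<bar> * (l1norm w - l1norm w')"
    by (simp add: algebra_simps)
  also have "\<bar>\<dots>\<bar> \<le> \<bar>\<bar>a\<bar> - \<bar>a'\<bar>\<bar> * l1norm w + \<bar>a'\<bar> * \<bar>l1norm w - l1norm w'\<bar>"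
    using abs_triangle_ineq[of "(\<bar>a\<bar> - \<bar>a'\<bar>) * l1norm w" "\<bar>a'\<bar> * (l1norm w - l1norm w')"]
      l1norm_nonneg[of w] by (simp add: abs_mult)
  also have "\<dots> \<le> \<bar>a - a'\<bar> * l1norm w + \<bar>a'\<bar> * l1norm (w - w')"
    using l1norm_nonneg[of w] abs_triangle_ineq3[of a a'] abs_l1norm_diff_le[of w w']
    by (intro add_mono mult_right_mono mult_left_mono) auto
  finally show ?thesis .
qed

text \<open>Vanishing beyond m makes params_in P m countable when P is.\<close>

definition params_in :: "(real \<times> (real^'d)) set \<Rightarrow> nat \<Rightarrow> (nat \<Rightarrow> real \<times> (real^'d)) set" where
  "params_in P m = {\<theta>. (\<forall>k<m. \<theta> k \<in> P) \<and> (\<forall>k\<ge>m. \<theta> k = (0, 0))}"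

lemma countable_params_in:
  fixes P :: "(real \<times> (real^'d)) set"
  assumes "countable P" shows "countable (params_in P m)"
proof -
  define F :: "(real \<times> (real^'d)) list \<Rightarrow> nat \<Rightarrow> real \<times> (real^'d)"
    where "F xs = (\<lambda>k. if k < m then xs ! k else (0, 0))" for xs
  have "params_in P m \<subseteq> F ` lists P"
  proof
    fix \<theta> assume \<theta>: "\<theta> \<in> params_in P m"
    then have "\<theta> = F (map \<theta> [0..<m])" by (auto simp: F_def params_in_def fun_eq_iff not_less)
    moreover have "map \<theta> [0..<m] \<in> lists P" using \<theta> by (auto simp: params_in_def)
    ultimately show "\<theta> \<in> F ` lists P" by blast
  qed
  moreover have "countable (F ` lists P)" using assms by simp
  ultimately show ?thesis by (rule countable_subset)
qed

text \<open>Both the network output on the cube and the path norm are locally Lipschitz in the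
  parameters, so a dense set of neurons approximates any network in both senses at once.\<close>

lemma params_in_dense_approx:
  fixes \<sigma> :: "real \<Rightarrow> real" and \<theta> :: "nat \<Rightarrow> real \<times> (real^'d)"
  assumes sigma_lip: "\<And>s t. \<bar>\<sigma> s - \<sigma> t\<bar> \<le> \<bar>s - t\<bar>" and sigma0: "\<sigma> 0 = 0"
    and dense: "\<And>X. open X \<Longrightarrow> X \<noteq> {} \<Longrightarrow> \<exists>p\<in>P. p \<in> X" and \<eta>: "\<eta> > 0"
  obtains \<theta>' where "\<theta>' \<in> params_in P m"
    and "\<And>x. (\<And>l. \<bar>x $ l\<bar> \<le> 1) \<Longrightarrow> \<bar>nn_out \<sigma> m \<theta> x - nn_out \<sigma> m \<theta>' x\<bar> \<le> \<eta>"
    and "\<bar>path_norm m \<theta> - path_norm m \<theta>'\<bar> \<le> \<eta>"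
proof -
  define Ck where "Ck k = l1norm (snd (\<theta> k)) + (\<bar>fst (\<theta> k)\<bar> + 1) * CARD('d)" for k
  define C where "C = (\<Sum>k<m. Ck k)"
  have C0: "C \<ge> 0" unfolding C_def Ck_def
    by (intro sum_nonneg add_nonneg_nonneg mult_nonneg_nonneg l1norm_nonneg) auto
  define r where "r = min 1 (\<eta> / (C + 1))"
  have r: "r > 0" "r \<le> 1" using \<eta> C0 by (auto simp: r_def)
  have "r * C \<le> \<eta> / (C + 1) * C" using C0 by (intro mult_right_mono) (auto simp: r_def)
  also have "\<dots> \<le> \<eta>" using C0 \<eta> by (simp add: field_simps)
  finally have rC: "r * C \<le> \<eta>" .
  have near_ex: "\<exists>p. p \<in> P \<and> dist (\<theta> k) p < r" for k
  proof -
    obtain p where "p \<in> P" "p \<in> ball (\<theta> k) r" using dense[of "ball (\<theta> k) r"] r by auto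
    then show ?thesis by (auto simp del: split_paired_Ex)
  qed
  define near where "near k = (SOME p. p \<in> P \<and> dist (\<theta> k) p < r)" for k
  have near: "near k \<in> P \<and> dist (\<theta> k) (near k) < r" for k
    unfolding near_def by (rule someI_ex[OF near_ex])
  define \<theta>' where "\<theta>' k = (if k < m then near k else (0, 0))" for k
  have \<theta>'_in: "\<theta>' \<in> params_in P m" using near by (auto simp: params_in_def \<theta>'_def)
  have neuron_err: "\<bar>fst (\<theta> k) - fst (\<theta>' k)\<bar> * l1norm (snd (\<theta> k))
      + \<bar>fst (\<theta>' k)\<bar> * l1norm (snd (\<theta> k) - snd (\<theta>' k)) \<le> r * Ck k" if k: "k < m" for k
  proof -
    have d: "dist (\<theta> k) (\<theta>' k) < r" using near k by (simp add: \<theta>'_def)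
    have da: "\<bar>fst (\<theta> k) - fst (\<theta>' k)\<bar> < r"
      using dist_fst_le[of "\<theta> k" "\<theta>' k"] d by (simp add: dist_real_def)
    have "norm (snd (\<theta> k) - snd (\<theta>' k)) < r"
      using dist_snd_le[of "\<theta> k" "\<theta>' k"] d by (simp add: dist_norm)
    then have "CARD('d) * norm (snd (\<theta> k) - snd (\<theta>' k)) \<le> CARD('d) * r"
      by (intro mult_left_mono) auto
    then have dw: "l1norm (snd (\<theta> k) - snd (\<theta>' k)) \<le> CARD('d) * r"
      using l1norm_le_norm[of "snd (\<theta> k) - snd (\<theta>' k)"] by linarith
    have "\<bar>fst (\<theta> k) - fst (\<theta>' k)\<bar> * l1norm (snd (\<theta> k)) \<le> r * l1norm (snd (\<theta> k))"
      using da l1norm_nonneg[of "snd (\<theta> k)"] by (intro mult_right_mono) auto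
    moreover have "\<bar>fst (\<theta>' k)\<bar> * l1norm (snd (\<theta> k) - snd (\<theta>' k)) \<le> (\<bar>fst (\<theta> k)\<bar> + 1) * (CARD('d) * r)"
      using da r dw l1norm_nonneg[of "snd (\<theta> k) - snd (\<theta>' k)"] by (intro mult_mono) auto
    ultimately show ?thesis by (simp add: Ck_def algebra_simps)
  qed
  have sum_err: "\<bar>(\<Sum>k<m. F (\<theta> k)) - (\<Sum>k<m. F (\<theta>' k))\<bar> \<le> \<eta>"
    if F: "\<And>k. k < m \<Longrightarrow> \<bar>F (\<theta> k) - F (\<theta>' k)\<bar>
        \<le> \<bar>fst (\<theta> k) - fst (\<theta>' k)\<bar> * l1norm (snd (\<theta> k))
          + \<bar>fst (\<theta>' k)\<bar> * l1norm (snd (\<theta> k) - snd (\<theta>' k))" for F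
  proof -
    have "\<bar>(\<Sum>k<m. F (\<theta> k)) - (\<Sum>k<m. F (\<theta>' k))\<bar> \<le> (\<Sum>k<m. \<bar>F (\<theta> k) - F (\<theta>' k)\<bar>)"
      by (simp add: sum_subtractf[symmetric] sum_abs)
    also have "\<dots> \<le> (\<Sum>k<m. r * Ck k)"
      by (intro sum_mono order_trans[OF F neuron_err]) auto
    also have "\<dots> \<le> \<eta>" using rC by (simp add: C_def sum_distrib_left)
    finally show ?thesis .
  qed
  show ?thesis
  proof (rule that[OF \<theta>'_in])
    fix x :: "real^'d" assume x: "\<And>l. \<bar>x $ l\<bar> \<le> 1"
    show "\<bar>nn_out \<sigma> m \<theta> x - nn_out \<sigma> m \<theta>' x\<bar> \<le> \<eta>"
      unfolding nn_out_def
      by (rule sum_err[where F="\<lambda>p. fst p * \<sigma> (snd p \<bullet> x)"]) (rule neuron_diff_le[OF sigma_lip sigma0 x])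
  next
    show "\<bar>path_norm m \<theta> - path_norm m \<theta>'\<bar> \<le> \<eta>"
      unfolding path_norm_def
      by (rule sum_err[where F="\<lambda>p. \<bar>fst p\<bar> * l1norm (snd p)"]) (rule path_norm_term_diff_le)
  qed
qed

lemma (in finite_measure) measure_UN_le_of_finite_subsets:
  assumes T: "countable T" and A: "\<And>t. t \<in> T \<Longrightarrow> A t \<in> sets M"
    and fin: "\<And>F. finite F \<Longrightarrow> F \<subseteq> T \<Longrightarrow> measure M (\<Union>t\<in>F. A t) \<le> a"
  shows "measure M (\<Union>t\<in>T. A t) \<le> a"
proof (cases "T = {}")
  case True
  then show ?thesis using fin[of "{}"] by simp
next
  case False
  define e where "e = from_nat_into T"
  have range_e: "range e = T" unfolding e_def by (rule range_from_nat_into[OF False T])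
  define G where "G k = (\<Union>j\<in>{..k}. A (e j))" for k
  have "incseq G" unfolding incseq_def G_def by (intro allI impI UN_mono) auto
  moreover have "range G \<subseteq> sets M" using A range_e by (auto simp: G_def)
  ultimately have lim: "(\<lambda>k. measure M (G k)) \<longlonglongrightarrow> measure M (\<Union>k. G k)"
    by (intro finite_Lim_measure_incseq)
  have "measure M (G k) \<le> a" for k
    unfolding G_def using fin[of "e ` {..k}"] range_e by auto
  then have "measure M (\<Union>k. G k) \<le> a" by (intro LIMSEQ_le_const2[OF lim]) auto
  moreover have "(\<Union>k. G k) = (\<Union>t\<in>T. A t)" unfolding G_def range_e[symmetric] by auto
  ultimately show ?thesis by simp
qed

section \<open>The generalization bound\<close>

locale two_layer_learning =
  fixes \<sigma> :: "real \<Rightarrow> real" and loss :: "real \<Rightarrow> 'b \<Rightarrow> real"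
    and D :: "((real ^ 'd) \<times> 'b) measure" and m n :: nat and A B :: real
  assumes sigma_lip: "\<And>s t. \<bar>\<sigma> s - \<sigma> t\<bar> \<le> \<bar>s - t\<bar>"
    and sigma_hom: "\<And>\<alpha> t. \<alpha> \<ge> 0 \<Longrightarrow> \<sigma> (\<alpha> * t) = \<alpha> * \<sigma> t"
    and loss_lip: "\<And>y s t. \<bar>loss s y - loss t y\<bar> \<le> A * \<bar>s - t\<bar>"
    and loss_bdd: "\<And>t y. \<bar>loss t y\<bar> \<le> B"
    and D: "prob_space D"
    and D_support: "\<And>z i. z \<in> space D \<Longrightarrow> \<bar>fst z $ i\<bar> \<le> 1"
    and loss_meas: "\<And>\<theta>. (\<lambda>z. loss (nn_out \<sigma> m \<theta> (fst z)) (snd z)) \<in> borel_measurable D"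
    and n_pos: "n > 0"
begin

abbreviation sample :: "(nat \<Rightarrow> (real ^ 'd) \<times> 'b) measure" where
  "sample \<equiv> PiM {..<n} (\<lambda>_. D)"

abbreviation risk_gap :: "(nat \<Rightarrow> real \<times> (real ^ 'd)) \<Rightarrow> (nat \<Rightarrow> (real ^ 'd) \<times> 'b) \<Rightarrow> real" where
  "risk_gap \<theta> S \<equiv> pop_risk loss \<sigma> m D \<theta> - emp_risk loss \<sigma> m n S \<theta>"

text \<open>The theorem's bound is deviation_bound (delta / (c Q^2)) Q with Q the path norm plus one.\<close>

definition deviation_bound :: "real \<Rightarrow> real \<Rightarrow> real" where
  "deviation_bound \<eta> Q = 4 * A * sqrt (2 * ln (2 * real CARD('d)) / real n) * Q
     + B * sqrt (2 * ln (2 / \<eta>) / real n)"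

lemma A_nonneg: "A \<ge> 0"
  using loss_lip[where y=undefined and s=1 and t=0] by simp

lemma B_nonneg: "B \<ge> 0"
  using loss_bdd[of 0 undefined] by simp

lemma rate_nonneg: "sqrt (2 * ln (2 * real CARD('d)) / real n) \<ge> 0"
proof -
  have "1 \<le> 2 * real CARD('d)" using zero_less_card_finite[where 'a='d] by linarith
  then show ?thesis by simp
qed

lemma sample_prob_space: "prob_space sample"
  by (rule prob_space_PiM) (use D in auto)

lemma risk_gap_measurable: "(\<lambda>S. risk_gap \<theta> S) \<in> borel_measurable sample"
proof -
  have "(\<lambda>S. loss (nn_out \<sigma> m \<theta> (fst (S i))) (snd (S i))) \<in> borel_measurable sample" if "i < n" for i
    using measurable_compose[OF measurable_component_singleton[of i "{..<n}" "\<lambda>_. D"] loss_meas[of \<theta>]]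
      that by simp
  then show ?thesis unfolding emp_risk_def
    by (intro borel_measurable_diff borel_measurable_const borel_measurable_times borel_measurable_sum)
       auto
qed

lemma deviation_event_sets:
  assumes "countable T"
  shows "{S \<in> space sample. \<exists>\<theta>\<in>T. b < \<bar>risk_gap \<theta> S\<bar>} \<in> sets sample"
proof -
  have "{S \<in> space sample. \<exists>\<theta>\<in>T. b < \<bar>risk_gap \<theta> S\<bar>} = (\<Union>\<theta>\<in>T. {S \<in> space sample. b < \<bar>risk_gap \<theta> S\<bar>})"
    by auto
  also have "\<dots> \<in> sets sample"
  proof (intro sets.countable_UN' assms image_subsetI)
    show "{S \<in> space sample. b < \<bar>risk_gap \<theta> S\<bar>} \<in> sets sample" for \<theta>
      using risk_gap_measurable[of \<theta>] by measurable
  qed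
  finally show ?thesis .
qed

text \<open>For a finite class, the two one-sided deviations are controlled separately: the signed
  losses s * loss with s = 1 and s = -1 form a finite function class to which symmetrization,
  contraction, Massart's lemma and McDiarmid's inequality apply.\<close>

lemma finite_class_risk_gap_bound:
  assumes B: "B > 0" and T: "finite T" "T \<noteq> {}" "\<And>\<theta>. \<theta> \<in> T \<Longrightarrow> path_norm m \<theta> \<le> Q"
    and \<delta>: "0 < \<delta>" "\<delta> < 1"
  shows "measure sample {S \<in> space sample. \<exists>\<theta>\<in>T. deviation_bound (2 * \<delta>) Q < \<bar>risk_gap \<theta> S\<bar>}
           \<le> 2 * \<delta>"
proof -
  interpret M: prob_space sample by (rule sample_prob_space)
  define R where "R = 2 * A * Q * sqrt (2 * ln (2 * real CARD('d)) / n)"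
  define h where "h s \<theta> z = s * loss (nn_out \<sigma> m \<theta> (fst z)) (snd z)"
    for s :: real and \<theta> :: "nat \<Rightarrow> real \<times> (real ^ 'd)" and z :: "(real ^ 'd) \<times> 'b"
  define Ev where "Ev s = {S \<in> space sample. sup_deviation D n (h s) T S \<ge> 2 * R + B * sqrt (2 * ln (1 / \<delta>) / n)}"
    for s
  have Ev: "measure sample (Ev s) \<le> \<delta>" "Ev s \<in> sets sample" if s: "s = 1 \<or> s = -1" for s
  proof -
    interpret finite_function_class D "h s" T n B
    proof (rule finite_function_class.intro[OF D n_pos T(1,2)])
      show "h s \<theta> \<in> borel_measurable D" for \<theta>
        unfolding h_def using loss_meas[of \<theta>] by measurable
      show "\<bar>h s \<theta> z\<bar> \<le> B" for \<theta> z
        using s loss_bdd by (auto simp: h_def)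
    qed
    show "measure sample (Ev s) \<le> \<delta>"
      unfolding Ev_def
    proof (rule sup_deviation_tail_bound[OF _ B \<delta>])
      fix z assume z: "\<And>i. i < n \<Longrightarrow> z i \<in> space D"
      show "(\<Sum>\<epsilon>\<in>rademacher_signs n. Max ((\<lambda>\<theta>. \<Sum>i<n. \<epsilon> i * h s \<theta> (z i)) ` T)) \<le> 2 ^ n * (n * R)"
        unfolding h_def R_def
      proof (rule rademacher_loss_network[OF sigma_lip sigma_hom _ T])
        show "\<bar>s * loss a y - s * loss b y\<bar> \<le> A * \<bar>a - b\<bar>" for y a b
          using s loss_lip[of a y b] by (auto simp: right_diff_distrib[symmetric] abs_minus_commute)
      qed (use D_support z n_pos in auto)
    qed
    show "Ev s \<in> sets sample"
      unfolding Ev_def using sup_deviation_measurable[of "{..<n}"] by measurable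
  qed
  have "{S \<in> space sample. \<exists>\<theta>\<in>T. deviation_bound (2 * \<delta>) Q < \<bar>risk_gap \<theta> S\<bar>} \<subseteq> Ev 1 \<union> Ev (-1)"
  proof
    fix S assume "S \<in> {S \<in> space sample. \<exists>\<theta>\<in>T. deviation_bound (2 * \<delta>) Q < \<bar>risk_gap \<theta> S\<bar>}"
    then obtain \<theta> where S: "S \<in> space sample" and \<theta>: "\<theta> \<in> T"
      and gap: "deviation_bound (2 * \<delta>) Q < \<bar>risk_gap \<theta> S\<bar>" by blast
    have "(\<integral>z. h s \<theta> z \<partial>D) - (1 / n) * (\<Sum>i<n. h s \<theta> (S i)) \<le> sup_deviation D n (h s) T S" for s
      unfolding sup_deviation_def using T \<theta> by (intro Max_ge) auto
    moreover have "(\<integral>z. h s \<theta> z \<partial>D) - (1 / n) * (\<Sum>i<n. h s \<theta> (S i)) = s * risk_gap \<theta> S" for s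
      by (simp add: h_def pop_risk_def emp_risk_def sum_distrib_left algebra_simps)
    ultimately have le: "s * risk_gap \<theta> S \<le> sup_deviation D n (h s) T S" for s
      by metis
    have bd: "deviation_bound (2 * \<delta>) Q = 2 * R + B * sqrt (2 * ln (1 / \<delta>) / n)"
      by (simp add: deviation_bound_def R_def)
    show "S \<in> Ev 1 \<union> Ev (-1)"
    proof (cases "risk_gap \<theta> S \<ge> 0")
      case True
      then have "S \<in> Ev 1" using le[of 1] gap S bd by (simp add: Ev_def)
      then show ?thesis by simp
    next
      case False
      then have "S \<in> Ev (-1)" using le[of "-1"] gap S bd by (simp add: Ev_def)
      then show ?thesis by simp
    qed
  qed
  then have "measure sample {S \<in> space sample. \<exists>\<theta>\<in>T. deviation_bound (2 * \<delta>) Q < \<bar>risk_gap \<theta> S\<bar>}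
      \<le> measure sample (Ev 1 \<union> Ev (-1))"
    using Ev by (intro M.finite_measure_mono) auto
  also have "\<dots> \<le> measure sample (Ev 1) + measure sample (Ev (-1))"
    using Ev by (intro measure_Un_le) auto
  also have "\<dots> \<le> 2 * \<delta>" using Ev(1)[of 1] Ev(1)[of "-1"] by simp
  finally show ?thesis .
qed

lemma countable_class_risk_gap_bound:
  assumes B: "B > 0" and T: "countable T" "\<And>\<theta>. \<theta> \<in> T \<Longrightarrow> path_norm m \<theta> \<le> Q" and \<eta>: "\<eta> > 0"
  shows "measure sample {S \<in> space sample. \<exists>\<theta>\<in>T. deviation_bound \<eta> Q < \<bar>risk_gap \<theta> S\<bar>} \<le> \<eta>"
proof (cases "\<eta> < 2")
  case False
  interpret M: prob_space sample by (rule sample_prob_space)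
  show ?thesis using M.prob_le_1 False by (smt (verit))
next
  case True
  interpret M: prob_space sample by (rule sample_prob_space)
  let ?bad = "\<lambda>\<theta>. {S \<in> space sample. deviation_bound \<eta> Q < \<bar>risk_gap \<theta> S\<bar>}"
  have "measure sample (\<Union>\<theta>\<in>T. ?bad \<theta>) \<le> \<eta>"
  proof (rule M.measure_UN_le_of_finite_subsets[OF T(1)])
    show "?bad \<theta> \<in> sets sample" for \<theta> using risk_gap_measurable by measurable
    fix F assume F: "finite F" "F \<subseteq> T"
    show "measure sample (\<Union>\<theta>\<in>F. ?bad \<theta>) \<le> \<eta>"
    proof (cases "F = {}")
      case False
      have "measure sample {S \<in> space sample. \<exists>\<theta>\<in>F. deviation_bound (2 * (\<eta> / 2)) Q < \<bar>risk_gap \<theta> S\<bar>}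
          \<le> 2 * (\<eta> / 2)"
        using F False T(2) \<eta> True by (intro finite_class_risk_gap_bound B) auto
      moreover have "(\<Union>\<theta>\<in>F. ?bad \<theta>) = {S \<in> space sample. \<exists>\<theta>\<in>F. deviation_bound \<eta> Q < \<bar>risk_gap \<theta> S\<bar>}"
        by auto
      ultimately show ?thesis by simp
    qed (use \<eta> in simp)
  qed
  moreover have "(\<Union>\<theta>\<in>T. ?bad \<theta>) = {S \<in> space sample. \<exists>\<theta>\<in>T. deviation_bound \<eta> Q < \<bar>risk_gap \<theta> S\<bar>}"
    by auto
  ultimately show ?thesis by simp
qed

lemma risk_gap_diff_le:
  assumes S: "S \<in> space sample" and e: "\<And>x. (\<And>l. \<bar>x $ l\<bar> \<le> 1) \<Longrightarrow> \<bar>nn_out \<sigma> m \<theta> x - nn_out \<sigma> m \<theta>' x\<bar> \<le> e"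
  shows "\<bar>risk_gap \<theta> S - risk_gap \<theta>' S\<bar> \<le> 2 * A * e"
proof -
  interpret D: prob_space D by (rule D)
  let ?L = "\<lambda>\<theta> z. loss (nn_out \<sigma> m \<theta> (fst z)) (snd z)"
  have \<ell>: "\<bar>?L \<theta> z - ?L \<theta>' z\<bar> \<le> A * e" if "z \<in> space D" for z
    using loss_lip[of "nn_out \<sigma> m \<theta> (fst z)" "snd z" "nn_out \<sigma> m \<theta>' (fst z)"]
      mult_left_mono[OF e[OF D_support[OF that]] A_nonneg] by linarith
  have "integrable D (?L \<theta>')" for \<theta>'
    using loss_bdd loss_meas[of \<theta>'] by (intro D.integrable_const_bound[where B=B]) auto
  then have "\<bar>pop_risk loss \<sigma> m D \<theta> - pop_risk loss \<sigma> m D \<theta>'\<bar> = \<bar>\<integral>z. ?L \<theta> z - ?L \<theta>' z \<partial>D\<bar>"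
    by (simp add: pop_risk_def)
  also have "\<dots> \<le> A * e"
    using \<ell> by (intro D.abs_integral_le_const borel_measurable_diff loss_meas)
  finally have pop: "\<bar>pop_risk loss \<sigma> m D \<theta> - pop_risk loss \<sigma> m D \<theta>'\<bar> \<le> A * e" .
  have "\<bar>\<Sum>i<n. ?L \<theta> (S i) - ?L \<theta>' (S i)\<bar> \<le> (\<Sum>i<n. A * e)"
    using \<ell> S by (intro order.trans[OF sum_abs sum_mono]) (auto simp: space_PiM PiE_def Pi_def)
  then have "\<bar>emp_risk loss \<sigma> m n S \<theta> - emp_risk loss \<sigma> m n S \<theta>'\<bar> \<le> A * e"
    using n_pos by (simp add: emp_risk_def sum_subtractf abs_mult field_simps
        flip: right_diff_distrib)
  with pop show ?thesis by linarith
qed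

text \<open>A bound on a countable dense family of networks transfers to every network, since
  both the risk gap and the path norm move by at most eta under an eta-approximation.\<close>

lemma risk_gap_le_of_dense:
  assumes P: "\<And>X. open X \<Longrightarrow> X \<noteq> {} \<Longrightarrow> \<exists>p\<in>P. p \<in> X" and S: "S \<in> space sample"
    and bound: "\<And>\<theta>'. \<theta>' \<in> params_in P m \<Longrightarrow> path_norm m \<theta>' < Q \<Longrightarrow> \<bar>risk_gap \<theta>' S\<bar> \<le> b"
    and \<theta>: "path_norm m \<theta> < Q"
  shows "\<bar>risk_gap \<theta> S\<bar> \<le> b"
proof (rule field_le_epsilon)
  fix e :: real assume e: "e > 0"
  define \<eta> where "\<eta> = min (e / (2 * A + 1)) ((Q - path_norm m \<theta>) / 2)"
  have \<eta>0: "\<eta> > 0" using e \<theta> A_nonneg by (simp add: \<eta>_def)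
  have "2 * A * \<eta> \<le> 2 * A * (e / (2 * A + 1))"
    using A_nonneg by (intro mult_left_mono) (auto simp: \<eta>_def)
  also have "\<dots> \<le> e" using A_nonneg e by (simp add: field_simps)
  finally have \<eta>: "2 * A * \<eta> \<le> e" .
  have "\<eta> \<le> (Q - path_norm m \<theta>) / 2" unfolding \<eta>_def by (rule min.cobounded2)
  then have \<eta>_le: "2 * \<eta> \<le> Q - path_norm m \<theta>" by simp
  obtain \<theta>' where \<theta>': "\<theta>' \<in> params_in P m"
    and out: "\<And>x. (\<And>l. \<bar>x $ l\<bar> \<le> 1) \<Longrightarrow> \<bar>nn_out \<sigma> m \<theta> x - nn_out \<sigma> m \<theta>' x\<bar> \<le> \<eta>"
    and pn: "\<bar>path_norm m \<theta> - path_norm m \<theta>'\<bar> \<le> \<eta>"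
    using params_in_dense_approx[OF sigma_lip activation_zero[OF sigma_lip sigma_hom] P \<eta>0] by blast
  have "path_norm m \<theta>' \<le> path_norm m \<theta> + \<eta>" using pn by (simp add: abs_le_iff)
  then have "path_norm m \<theta>' < Q" using \<eta>_le \<eta>0 by linarith
  then have "\<bar>risk_gap \<theta>' S\<bar> \<le> b" by (rule bound[OF \<theta>'])
  moreover have "\<bar>risk_gap \<theta> S - risk_gap \<theta>' S\<bar> \<le> 2 * A * \<eta>"
    by (rule risk_gap_diff_le[OF S]) (rule out)
  ultimately show "\<bar>risk_gap \<theta> S\<bar> \<le> b + e" using \<eta> by linarith
qed

end

lemma inverse_squares_Suc_sums: "(\<lambda>k. 1 / (real (Suc k))\<^sup>2) sums (pi\<^sup>2 / 6)"
  using inverse_squares_sums by (simp add: add.commute)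

context two_layer_learning
begin

lemma deviation_bound_level_mono:
  assumes Q: "0 < Q" "Q \<le> Q'" and \<delta>: "\<delta> > 0" and c: "c > 0"
  shows "deviation_bound (\<delta> / (c * Q\<^sup>2)) Q \<le> deviation_bound (\<delta> / (c * Q'\<^sup>2)) Q'"
proof -
  have "ln (2 * c * Q\<^sup>2 / \<delta>) \<le> ln (2 * c * Q'\<^sup>2 / \<delta>)"
    using Q \<delta> c by (intro ln_mono divide_right_mono mult_left_mono power_mono) auto
  then have "sqrt (2 * ln (2 * c * Q\<^sup>2 / \<delta>) / n) \<le> sqrt (2 * ln (2 * c * Q'\<^sup>2 / \<delta>) / n)"
    by (intro real_sqrt_le_mono divide_right_mono) auto
  moreover have "4 * A * sqrt (2 * ln (2 * real CARD('d)) / n) * Q \<le> 4 * A * sqrt (2 * ln (2 * real CARD('d)) / n) * Q'"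
    using Q A_nonneg rate_nonneg by (intro mult_left_mono) auto
  ultimately show ?thesis
    using B_nonneg by (simp add: deviation_bound_def mult_ac add_mono mult_left_mono)
qed

lemma risk_gap_le_deviation_bound_if_B_eq_0:
  assumes "B = 0" "Q \<ge> 0"
  shows "\<bar>risk_gap \<theta> S\<bar> \<le> deviation_bound \<eta> Q"
  unfolding deviation_bound_def using assms loss_bdd A_nonneg rate_nonneg
  by (simp add: pop_risk_def emp_risk_def)

text \<open>Peeling: the networks of path norm below q + 1 are handled at confidence
  delta / (c (q + 1)^2), and these confidences sum to delta.\<close>

lemma uniform_risk_gap_bound:
  assumes B: "B > 0" and \<delta>: "\<delta> > 0"
  defines "c \<equiv> (\<Sum>k. 1 / (real (Suc k))\<^sup>2)"
  shows "\<exists>E \<in> sets sample. measure sample E \<ge> 1 - \<delta> \<and> (\<forall>S \<in> E. \<forall>\<theta>.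
           \<bar>risk_gap \<theta> S\<bar> \<le> deviation_bound (\<delta> / (c * (path_norm m \<theta> + 1)\<^sup>2)) (path_norm m \<theta> + 1))"
proof -
  interpret M: prob_space sample by (rule sample_prob_space)
  obtain P :: "(real \<times> (real ^ 'd)) set"
    where P: "countable P" "\<And>X. open X \<Longrightarrow> X \<noteq> {} \<Longrightarrow> \<exists>p\<in>P. p \<in> X"
    using countable_dense_exists by blast
  have c_eq: "c = pi\<^sup>2 / 6" unfolding c_def by (rule sums_unique[OF inverse_squares_Suc_sums, symmetric])
  have c: "(\<lambda>k. 1 / (real (Suc k))\<^sup>2) sums c" "c > 0"
    unfolding c_eq by (rule inverse_squares_Suc_sums) simp
  define Q where "Q q = real (Suc q)" for q
  define \<eta> where "\<eta> q = \<delta> / (c * (Q q)\<^sup>2)" for q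
  define T where "T q = {\<theta> \<in> params_in P m. path_norm m \<theta> < Q q}" for q
  define bad where "bad q = {S \<in> space sample. \<exists>\<theta>\<in>T q. deviation_bound (\<eta> q) (Q q) < \<bar>risk_gap \<theta> S\<bar>}" for q
  have T: "countable (T q)" for q
    unfolding T_def by (rule countable_subset[OF _ countable_params_in[OF P(1)]]) auto
  have bad: "bad q \<in> sets sample" "measure sample (bad q) \<le> \<eta> q" for q
  proof -
    show "bad q \<in> sets sample" unfolding bad_def by (rule deviation_event_sets[OF T])
    have "0 < \<eta> q" using c \<delta> by (simp add: \<eta>_def Q_def)
    then show "measure sample (bad q) \<le> \<eta> q"
      unfolding bad_def using T by (intro countable_class_risk_gap_bound[OF B]) (auto simp: T_def)
  qed
  have \<eta>_eq: "(\<lambda>q. \<delta> / c * (1 / (real (Suc q))\<^sup>2)) = \<eta>" by (simp add: \<eta>_def Q_def fun_eq_iff)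
  have "\<delta> / c * c = \<delta>" using c(2) by simp
  then have \<eta>_sums: "\<eta> sums \<delta>" using sums_mult[OF c(1), of "\<delta> / c"] unfolding \<eta>_eq by simp
  have summable: "summable (\<lambda>q. measure sample (bad q))"
    using bad(2) by (intro summable_comparison_test'[OF sums_summable[OF \<eta>_sums]]) auto
  have "measure sample (\<Union>q. bad q) \<le> (\<Sum>q. measure sample (bad q))"
    using bad(1) summable by (intro M.finite_measure_subadditive_countably) auto
  also have "\<dots> \<le> (\<Sum>q. \<eta> q)"
    using bad(2) summable sums_summable[OF \<eta>_sums] by (intro suminf_le) auto
  also have "\<dots> = \<delta>" using \<eta>_sums by (simp add: sums_iff)
  finally have "measure sample (\<Union>q. bad q) \<le> \<delta>" .
  moreover have "\<bar>risk_gap \<theta> S\<bar> \<le> deviation_bound (\<delta> / (c * (path_norm m \<theta> + 1)\<^sup>2)) (path_norm m \<theta> + 1)"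
    if S: "S \<in> space sample - (\<Union>q. bad q)" for S \<theta>
  proof -
    define q where "q = nat \<lfloor>path_norm m \<theta>\<rfloor>"
    have Q: "path_norm m \<theta> < Q q" "0 < Q q" "Q q \<le> path_norm m \<theta> + 1"
      using path_norm_nonneg[of m \<theta>] by (simp_all add: Q_def q_def) linarith+
    have "S \<in> space sample" "S \<notin> bad q" using S by blast+
    then have "\<bar>risk_gap \<theta>' S\<bar> \<le> deviation_bound (\<eta> q) (Q q)"
      if "\<theta>' \<in> params_in P m" "path_norm m \<theta>' < Q q" for \<theta>'
      using that unfolding bad_def T_def by (auto simp: not_less)
    then have "\<bar>risk_gap \<theta> S\<bar> \<le> deviation_bound (\<eta> q) (Q q)"
      using S by (intro risk_gap_le_of_dense[OF P(2) _ _ Q(1)]) auto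
    also have "\<dots> \<le> deviation_bound (\<delta> / (c * (path_norm m \<theta> + 1)\<^sup>2)) (path_norm m \<theta> + 1)"
      unfolding \<eta>_def using Q \<delta> c by (intro deviation_bound_level_mono) auto
    finally show ?thesis .
  qed
  ultimately show ?thesis
    using bad(1) M.prob_compl[of "\<Union>q. bad q"]
    by (intro bexI[of _ "space sample - (\<Union>q. bad q)"]) auto
qed

end

theorem mainTheorem5:
  fixes \<sigma> :: "real \<Rightarrow> real"
    and loss :: "real \<Rightarrow> 'b \<Rightarrow> real"
    and D :: "((real ^ 'd) \<times> 'b) measure"
    and m n :: nat and A B \<delta> :: real
  assumes sigma_lip: "\<And>s t. \<bar>\<sigma> s - \<sigma> t\<bar> \<le> \<bar>s - t\<bar>"
    and sigma_hom: "\<And>\<alpha> t. \<alpha> \<ge> 0 \<Longrightarrow> \<sigma> (\<alpha> * t) = \<alpha> * \<sigma> t"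
    and loss_lip: "\<And>y s t. \<bar>loss s y - loss t y\<bar> \<le> A * \<bar>s - t\<bar>"
    and loss_bdd: "\<And>t y. \<bar>loss t y\<bar> \<le> B"
    and D: "prob_space D"
    and D_support: "\<And>z i. z \<in> space D \<Longrightarrow> \<bar>fst z $ i\<bar> \<le> 1"
    and loss_meas: "\<And>\<theta>. (\<lambda>z. loss (nn_out \<sigma> m \<theta> (fst z)) (snd z)) \<in> borel_measurable D"
    and n_pos: "n > 0"
    and delta_pos: "\<delta> > 0"
  shows "\<exists>E \<in> sets (PiM {..<n} (\<lambda>_. D)).
           measure (PiM {..<n} (\<lambda>_. D)) E \<ge> 1 - \<delta> \<and>
           (\<forall>S \<in> E. \<forall>\<theta>.
              \<bar>pop_risk loss \<sigma> m D \<theta> - emp_risk loss \<sigma> m n S \<theta>\<bar>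
                \<le> 4 * A * sqrt (2 * ln (2 * real CARD('d)) / real n) * (path_norm m \<theta> + 1)
                  + B * sqrt (2 * ln (2 * (\<Sum>k. 1 / (real (Suc k))\<^sup>2) * (path_norm m \<theta> + 1)\<^sup>2 / \<delta>)
                                / real n))"
proof -
  interpret two_layer_learning \<sigma> loss D m n A B
    by (rule two_layer_learning.intro[OF sigma_lip sigma_hom loss_lip loss_bdd D D_support loss_meas n_pos])
  interpret M: prob_space sample by (rule sample_prob_space)
  let ?c = "\<Sum>k. 1 / (real (Suc k))\<^sup>2"
  have bound: "deviation_bound (\<delta> / (?c * Q\<^sup>2)) Q
      = 4 * A * sqrt (2 * ln (2 * real CARD('d)) / real n) * Q + B * sqrt (2 * ln (2 * ?c * Q\<^sup>2 / \<delta>) / real n)"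
    for Q by (simp add: deviation_bound_def mult_ac)
  show ?thesis
  proof (cases "B = 0")
    case True
    then have "\<bar>risk_gap \<theta> S\<bar> \<le> deviation_bound (\<delta> / (?c * (path_norm m \<theta> + 1)\<^sup>2)) (path_norm m \<theta> + 1)"
      for \<theta> S
      using path_norm_nonneg[of m \<theta>] by (intro risk_gap_le_deviation_bound_if_B_eq_0) auto
    then show ?thesis
      unfolding bound using M.prob_space delta_pos by (intro bexI[of _ "space sample"]) auto
  next
    case False
    with B_nonneg have "B > 0" by simp
    from uniform_risk_gap_bound[OF this delta_pos] show ?thesis unfolding bound .
  qed
qed

end
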